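(* Let $k\ge 1$ and $d\ge 1$. For each $x \in \mathbb{R}^d$ let $a_x$ be a convolution product of $k$ bump functions on $\mathbb{R}^d$, and assume that $(x,y)\mapsto a_x(y)$ is measurable and belongs to $L^\infty(\mathrm{d}x; L^1(\mathrm{d}y))$. Define, for $f\in L^2(\mathbb{R}^d)\cap L^1(\mathbb{R}^d)$, $$Tf(\xi)=\int_{\mathbb{R}^d} \widehat{a}_x(\xi)\, e^{2\pi i x \cdot \xi}\, f(x)\, \mathrm{d} x .$$ Then there is a constant $C$ depending only on $k$ and $d$ such that $\|Tf\|_{L^2(\mathbb{R}^d)}\le C \|f\|_{L^2(\mathbb{R}^d)}$ for all such $f$.
   Context: A measurable function $a$ on $\mathbb{R}^d$ is called a bump function if there exists an axis-parallel rectangle $R$ centered at the origin with $|a|\le |R|^{-1}1_R$ pointwise. $\widehat{a}_x$ denotes the Fourier transform of $a_x$. *)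

theory Defs
  imports "HOL-Analysis.Analysis"
begin

definition bump :: "('a::euclidean_space \<Rightarrow> complex) \<Rightarrow> bool" where
  "bump b \<longleftrightarrow> b \<in> borel_measurable lebesgue \<and>
     (\<exists>v::'a. (\<forall>i\<in>Basis. 0 < v \<bullet> i) \<and>
        (\<forall>y. norm (b y) \<le> indicator (cbox (-v) v) y / measure lebesgue (cbox (-v) v)))"

definition conv :: "('a::euclidean_space \<Rightarrow> complex) \<Rightarrow> ('a \<Rightarrow> complex) \<Rightarrow> 'a \<Rightarrow> complex" where
  "conv f g = (\<lambda>y. LINT z|lebesgue. f (y - z) * g z)"

fun conv_prod :: "('a::euclidean_space \<Rightarrow> complex) list \<Rightarrow> 'a \<Rightarrow> complex" where
  "conv_prod [] = (\<lambda>_. 0)"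
| "conv_prod [b] = b"
| "conv_prod (b # c # bs) = conv b (conv_prod (c # bs))"

definition fourier :: "('a::euclidean_space \<Rightarrow> complex) \<Rightarrow> 'a \<Rightarrow> complex" where
  "fourier f = (\<lambda>\<xi>. LINT y|lebesgue. f y * cis (- 2 * pi * (y \<bullet> \<xi>)))"

definition opT :: "('a::euclidean_space \<Rightarrow> 'a \<Rightarrow> complex) \<Rightarrow> ('a \<Rightarrow> complex) \<Rightarrow> 'a \<Rightarrow> complex" where
  "opT a f = (\<lambda>\<xi>. LINT x|lebesgue. fourier (a x) \<xi> * cis (2 * pi * (x \<bullet> \<xi>)) * f x)"

end

theory Submission
  imports Defs "HOL-Probability.Probability"
begin

text \<open>Writing \<open>G w = \<integral> a x (x - w) f x dx\<close>, the operator is \<open>T f = inv_fourier G\<close>, so by the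
  Plancherel inequality (proved here for integrable functions by Gaussian regularisation and
  Fatou's lemma) it suffices to bound the \<open>L\<^sup>2\<close> norm of \<open>G\<close>. A convolution product of \<open>k\<close> bumps
  is dominated by the corresponding convolution of normalised box indicators, and averages
  against a centred box are dominated by the strong maximal function, the composition of the
  one-dimensional dyadic maximal functions along the coordinate axes. Hence
  \<open>\<integral> H |G| \<le> \<integral> |f| M\<^sup>k H\<close> for every \<open>H \<ge> 0\<close>, and the \<open>L\<^sup>2\<close> bound of the maximal function
  (Vitali covering, weak type (1,1), Marcinkiewicz interpolation, one coordinate at a time)
  yields \<open>\<parallel>G\<parallel>\<^sub>2 \<le> 160\<^bsup>dk/2\<^esup> \<parallel>f\<parallel>\<^sub>2\<close> by duality.\<close>

section \<open>The one-dimensional dyadic maximal function\<close>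

definition dyadic_avg :: "(real \<Rightarrow> ennreal) \<Rightarrow> int \<Rightarrow> real \<Rightarrow> ennreal" where
  "dyadic_avg h n t =
     ennreal (1 / 2 powr (n + 1)) * (\<integral>\<^sup>+s. indicator {-(2 powr n)..2 powr n} s * h (t - s) \<partial>lborel)"

definition dyadic_maximal :: "(real \<Rightarrow> ennreal) \<Rightarrow> real \<Rightarrow> ennreal" where
  "dyadic_maximal h t = (SUP n. dyadic_avg h n t)"

lemma dyadic_avg_measurable [measurable]:
  assumes [measurable]: "h \<in> borel_measurable borel"
  shows "dyadic_avg h n \<in> borel_measurable borel"
  unfolding dyadic_avg_def by measurable

lemma dyadic_maximal_measurable [measurable]:
  assumes [measurable]: "h \<in> borel_measurable borel"
  shows "dyadic_maximal h \<in> borel_measurable borel"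
  unfolding dyadic_maximal_def by measurable

lemma nn_integral_interval_shift_eq_cball:
  assumes [measurable]: "h \<in> borel_measurable borel"
  shows "(\<integral>\<^sup>+s. indicator {-r..r} s * h (t - s) \<partial>lborel) = (\<integral>\<^sup>+u. indicator (cball t r) u * h u \<partial>lborel)"
proof -
  have [measurable]: "cball t r \<in> sets borel" by (simp add: borel_closed)
  have "(\<integral>\<^sup>+u. indicator (cball t r) u * h u \<partial>lborel)
      = ennreal \<bar>-1\<bar> * (\<integral>\<^sup>+s. indicator (cball t r) (t + -1 * s) * h (t + -1 * s) \<partial>lborel)"
    by (rule nn_integral_real_affine) (auto, measurable)
  also have "\<dots> = (\<integral>\<^sup>+s. indicator {-r..r} s * h (t - s) \<partial>lborel)"
    by (auto intro!: nn_integral_cong simp: indicator_def dist_real_def abs_le_iff)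
  finally show ?thesis ..
qed

lemma emeasure_UN_countable_le:
  assumes sets: "\<And>i. i \<in> I \<Longrightarrow> X i \<in> sets M" and I: "countable I"
  shows "emeasure M (\<Union>(X ` I)) \<le> (\<integral>\<^sup>+i. emeasure M (X i) \<partial>count_space I)"
proof -
  have le: "indicator (\<Union>(X ` I)) x \<le> (\<integral>\<^sup>+i. indicator (X i) x \<partial>count_space I)" for x
  proof cases
    assume "x \<in> \<Union>(X ` I)"
    then obtain j where j: "j \<in> I" "x \<in> X j" by auto
    have "(1::ennreal) = (\<integral>\<^sup>+i. indicator {j} i \<partial>count_space I)"
      using j by (subst nn_integral_indicator) auto
    also have "\<dots> \<le> (\<integral>\<^sup>+i. indicator (X i) x \<partial>count_space I)"
      by (rule nn_integral_mono) (auto simp: indicator_def j)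
    finally show ?thesis using j by (auto simp: indicator_def)
  qed simp
  have "\<Union>(X ` I) \<in> sets M" using sets I by (intro sets.countable_UN') auto
  then have "emeasure M (\<Union>(X ` I)) = (\<integral>\<^sup>+x. indicator (\<Union>(X ` I)) x \<partial>M)" by simp
  also have "\<dots> \<le> (\<integral>\<^sup>+x. \<integral>\<^sup>+i. indicator (X i) x \<partial>count_space I \<partial>M)"
    by (rule nn_integral_mono) (rule le)
  also have "\<dots> = (\<integral>\<^sup>+i. \<integral>\<^sup>+x. indicator (X i) x \<partial>M \<partial>count_space I)"
    by (rule nn_integral_count_space_nn_integral) (use assms in auto)
  also have "\<dots> = (\<integral>\<^sup>+i. emeasure M (X i) \<partial>count_space I)"
    by (intro nn_integral_cong) (auto simp: sets)
  finally show ?thesis .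
qed

lemma dyadic_maximal_gt_imp_heavy_ball:
  assumes [measurable]: "h \<in> borel_measurable borel" and "ennreal l < dyadic_maximal h t"
  shows "\<exists>r>0. ennreal (l * (2 * r)) < (\<integral>\<^sup>+u. indicator (cball t r) u * h u \<partial>lborel)"
proof -
  obtain n where "ennreal l < dyadic_avg h n t"
    using assms(2) unfolding dyadic_maximal_def by (auto simp: less_SUP_iff)
  define r where "r = 2 powr n"
  define J where "J = (\<integral>\<^sup>+u. indicator (cball t r) u * h u \<partial>lborel)"
  have "ennreal l < ennreal (1 / (2 * r)) * J"
    using \<open>ennreal l < dyadic_avg h n t\<close>
    unfolding dyadic_avg_def J_def r_def nn_integral_interval_shift_eq_cball[OF assms(1)]
    by (simp add: powr_add mult.commute)
  then have "ennreal (2 * r) * ennreal l < ennreal (2 * r) * (ennreal (1 / (2 * r)) * J)"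
    by (intro ennreal_mult_strict_left_mono) (auto simp: r_def)
  also have "\<dots> = J"
    by (simp add: r_def ennreal_mult[symmetric] mult.assoc[symmetric])
  finally show ?thesis
    by (intro exI[of _ r]) (auto simp: J_def r_def ennreal_mult''[symmetric] mult.commute)
qed

lemma emeasure_le_heavy_cballs:
  fixes h :: "real \<Rightarrow> ennreal"
  assumes [measurable]: "h \<in> borel_measurable borel" "S \<in> sets borel" and l: "0 < l"
    and r: "\<And>t. t \<in> S \<Longrightarrow> 0 < r t \<and> ennreal (l * (2 * r t)) < (\<integral>\<^sup>+u. indicator (cball t (r t)) u * h u \<partial>lborel)"
    and r_bound: "\<And>t. t \<in> S \<Longrightarrow> r t \<le> B"
  shows "emeasure lborel S \<le> ennreal (5 / l) * (\<integral>\<^sup>+u. h u \<partial>lborel)"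
proof -
  define J where "J t = (\<integral>\<^sup>+u. indicator (cball t (r t)) u * h u \<partial>lborel)" for t
  obtain C where C: "countable C" "C \<subseteq> S"
      "pairwise (\<lambda>i j. disjnt (cball i (r i)) (cball j (r j))) C"
      "S \<subseteq> (\<Union>i\<in>C. cball i (5 * r i))"
  proof (rule Vitali_covering_lemma_cballs[where K=S and a="\<lambda>i. i"])
    show "S \<subseteq> (\<Union>i\<in>S. cball i (r i))"
    proof
      fix t assume t: "t \<in> S"
      then have "t \<in> cball t (r t)" using r[OF t] by simp
      then show "t \<in> (\<Union>i\<in>S. cball i (r i))" using t by blast
    qed
  qed (use r r_bound in auto)
  have "emeasure lborel S \<le> emeasure lborel (\<Union>i\<in>C. cball i (5 * r i))"
    by (rule emeasure_mono) (use C in \<open>auto intro: sets.countable_UN' simp: borel_closed\<close>)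
  also have "\<dots> \<le> (\<integral>\<^sup>+i. emeasure lborel (cball i (5 * r i)) \<partial>count_space C)"
    by (rule emeasure_UN_countable_le) (use C in \<open>auto simp: borel_closed\<close>)
  also have "\<dots> \<le> (\<integral>\<^sup>+i. ennreal (5 / l) * J i \<partial>count_space C)"
  proof (rule nn_integral_mono)
    fix i assume "i \<in> space (count_space C)"
    then have i: "0 < r i" "ennreal (l * (2 * r i)) < J i" using C r unfolding J_def by auto
    have "emeasure lborel (cball i (5 * r i)) = ennreal (5 / l) * ennreal (l * (2 * r i))"
      using l i by (simp add: cball_eq_atLeastAtMost ennreal_mult[symmetric])
    also have "\<dots> \<le> ennreal (5 / l) * J i"
      using i by (intro mult_left_mono) auto
    finally show "emeasure lborel (cball i (5 * r i)) \<le> ennreal (5 / l) * J i" .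
  qed
  also have "\<dots> = ennreal (5 / l) * (\<integral>\<^sup>+i. J i \<partial>count_space C)"
    by (rule nn_integral_cmult) auto
  also have "(\<integral>\<^sup>+i. J i \<partial>count_space C) = emeasure (density lborel h) (\<Union>i\<in>C. cball i (r i))"
    using C by (subst emeasure_UN_countable)
      (auto simp: J_def emeasure_density borel_closed mult.commute disjoint_family_on_def
        pairwise_def disjnt_def intro!: nn_integral_cong)
  also have "\<dots> \<le> emeasure (density lborel h) UNIV"
    by (rule emeasure_mono) auto
  also have "\<dots> = (\<integral>\<^sup>+u. h u \<partial>lborel)"
    by (simp add: emeasure_density)
  finally show ?thesis by (simp add: mult_left_mono)
qed

lemma dyadic_maximal_weak_type:
  assumes h [measurable]: "h \<in> borel_measurable borel" and l: "0 < l"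
  shows "emeasure lborel {t. ennreal l < dyadic_maximal h t} \<le> ennreal (5 / l) * (\<integral>\<^sup>+u. h u \<partial>lborel)"
proof (cases "(\<integral>\<^sup>+u. h u \<partial>lborel) = \<infinity>")
  case True
  then show ?thesis using l by (simp add: ennreal_mult_top)
next
  case False
  define I where "I = enn2real (\<integral>\<^sup>+u. h u \<partial>lborel)"
  have I: "(\<integral>\<^sup>+u. h u \<partial>lborel) = ennreal I"
    using False by (auto simp: I_def less_top)
  define S where "S = {t. ennreal l < dyadic_maximal h t}"
  define J where "J t r = (\<integral>\<^sup>+u. indicator (cball t r) u * h u \<partial>lborel)" for t r
  have "\<forall>t\<in>S. \<exists>r>0. ennreal (l * (2 * r)) < J t r"
    using dyadic_maximal_gt_imp_heavy_ball[OF h] unfolding S_def J_def by blast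
  then obtain r where r: "\<And>t. t \<in> S \<Longrightarrow> 0 < r t \<and> ennreal (l * (2 * r t)) < J t (r t)"
    using bchoice by metis
  have r_bound: "r t \<le> I / (2 * l)" if "t \<in> S" for t
  proof -
    have "J t (r t) \<le> ennreal I"
      unfolding J_def I[symmetric] by (rule nn_integral_mono) (auto simp: indicator_def)
    then have "ennreal (l * (2 * r t)) < ennreal I" using r[OF that] by auto
    then have "l * (2 * r t) < I" using l r[OF that] by (simp add: ennreal_less_iff)
    then show ?thesis using l by (simp add: field_simps)
  qed
  show ?thesis
    unfolding S_def[symmetric]
  proof (rule emeasure_le_heavy_cballs[where r=r, OF h _ l])
    show "S \<in> sets borel"
      unfolding S_def by measurable
  qed (use r r_bound in \<open>auto simp: J_def\<close>)
qed

lemma nn_integral_layer_Ico: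
  assumes "0 \<le> c"
  shows "(\<integral>\<^sup>+x. ennreal (2 * x) * indicator {0..<c} x \<partial>lborel) = ennreal (c\<^sup>2)"
proof -
  have "(\<integral>\<^sup>+x. ennreal (2 * x) * indicator {0..<c} x \<partial>lborel)
      = (\<integral>\<^sup>+x. ennreal (2 * x) * indicator {0..c} x \<partial>lborel)"
    by (rule nn_integral_cong_AE)
      (use AE_lborel_singleton[of c] in \<open>eventually_elim, auto simp: indicator_def\<close>)
  also have "\<dots> = c\<^sup>2 - 0\<^sup>2"
    by (rule nn_integral_FTC_Icc) (use assms in \<open>auto intro!: derivative_eq_intros\<close>)
  finally show ?thesis by simp
qed

lemma square_le_nn_integral_layers:
  fixes y :: ennreal
  shows "y\<^sup>2 \<le> (\<integral>\<^sup>+x. ennreal (2 * x) * indicator {x. ennreal x < y} x \<partial>lborel)"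
    (is "_ \<le> ?L")
proof (cases y)
  case (real c)
  then have "y\<^sup>2 = (\<integral>\<^sup>+x. ennreal (2 * x) * indicator {0..<c} x \<partial>lborel)"
    by (simp add: nn_integral_layer_Ico ennreal_power)
  also have "\<dots> \<le> ?L"
    by (rule nn_integral_mono) (auto simp: indicator_def real ennreal_less_iff)
  finally show ?thesis .
next
  case top
  have "of_nat n \<le> ?L" for n
  proof -
    have "(of_nat n :: ennreal) \<le> of_nat (n\<^sup>2)"
      by (intro of_nat_mono) (simp add: power2_eq_square le_square)
    also have "\<dots> = (\<integral>\<^sup>+x. ennreal (2 * x) * indicator {0..<real n} x \<partial>lborel)"
      by (simp add: nn_integral_layer_Ico ennreal_of_nat_eq_real_of_nat)
    also have "\<dots> \<le> ?L"
      by (rule nn_integral_mono) (auto simp: indicator_def top)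
    finally show ?thesis .
  qed
  then have "(SUP n. of_nat n :: ennreal) \<le> ?L"
    by (rule SUP_least)
  then show ?thesis
    by (simp add: ennreal_SUP_of_nat_eq_top top_unique)
qed

lemma dyadic_avg_le_truncated:
  assumes [measurable]: "h \<in> borel_measurable borel" and c: "0 \<le> c"
  shows "dyadic_avg h n t \<le> dyadic_avg (\<lambda>u. h u * indicator {u. ennreal c < h u} u) n t + ennreal c"
proof -
  let ?g = "\<lambda>u. h u * indicator {u. ennreal c < h u} u"
  let ?I = "\<lambda>s. indicator {-(2 powr n)..2 powr n} s :: ennreal"
  have "(\<integral>\<^sup>+s. ?I s * h (t - s) \<partial>lborel) \<le> (\<integral>\<^sup>+s. ?I s * ?g (t - s) + ennreal c * ?I s \<partial>lborel)"
    by (rule nn_integral_mono) (auto simp: indicator_def not_less)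
  also have "\<dots> = (\<integral>\<^sup>+s. ?I s * ?g (t - s) \<partial>lborel) + ennreal c * ennreal (2 powr (real_of_int n + 1))"
    by (subst nn_integral_add) (auto simp: nn_integral_cmult powr_add mult.commute)
  finally have "dyadic_avg h n t \<le> ennreal (1 / 2 powr (real_of_int n + 1)) *
      ((\<integral>\<^sup>+s. ?I s * ?g (t - s) \<partial>lborel) + ennreal c * ennreal (2 powr (real_of_int n + 1)))"
    unfolding dyadic_avg_def by (rule mult_left_mono) auto
  also have "\<dots> = dyadic_avg ?g n t + ennreal c"
    unfolding dyadic_avg_def distrib_left
    by (simp add: ennreal_mult[symmetric] mult.assoc mult.left_commute[of "ennreal (1 / _)"])
  finally show ?thesis .
qed

lemma dyadic_maximal_le_truncated:
  assumes [measurable]: "h \<in> borel_measurable borel" and c: "0 \<le> c"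
  shows "dyadic_maximal h t \<le> dyadic_maximal (\<lambda>u. h u * indicator {u. ennreal c < h u} u) t + ennreal c"
  unfolding dyadic_maximal_def
proof (rule SUP_least)
  fix n
  have "dyadic_avg h n t \<le> dyadic_avg (\<lambda>u. h u * indicator {u. ennreal c < h u} u) n t + ennreal c"
    by (rule dyadic_avg_le_truncated) (use c in auto)
  also have "\<dots> \<le> (SUP n. dyadic_avg (\<lambda>u. h u * indicator {u. ennreal c < h u} u) n t) + ennreal c"
    by (intro add_right_mono SUP_upper) auto
  finally show "dyadic_avg h n t \<le> \<dots>" .
qed

text \<open>Weak type (1,1) applied to the part of \<open>h\<close> above level \<open>l/2\<close>, the part below being
  harmless since averages of it stay below \<open>l/2\<close>.\<close>

lemma dyadic_maximal_level_set_le: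
  assumes [measurable]: "h \<in> borel_measurable borel"
  shows "ennreal (2 * l) * emeasure lborel {t. ennreal l < dyadic_maximal h t}
    \<le> 20 * (indicator {0<..} l * (\<integral>\<^sup>+u. h u * indicator {u. ennreal (l / 2) < h u} u \<partial>lborel))"
proof (cases "0 < l")
  case True
  define H where "H u = h u * indicator {u. ennreal (l / 2) < h u} u" for u
  have [measurable]: "H \<in> borel_measurable borel"
    unfolding H_def by measurable
  have "{t. ennreal l < dyadic_maximal h t} \<subseteq> {t. ennreal (l / 2) < dyadic_maximal H t}"
  proof
    fix t assume "t \<in> {t. ennreal l < dyadic_maximal h t}"
    then have "ennreal l < dyadic_maximal H t + ennreal (l / 2)"
      using dyadic_maximal_le_truncated[of h "l / 2" t] True unfolding H_def by auto
    also have "ennreal l = ennreal (l / 2) + ennreal (l / 2)"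
      using True by (simp add: ennreal_plus[symmetric])
    finally show "t \<in> {t. ennreal (l / 2) < dyadic_maximal H t}"
      by (simp add: add.commute ennreal_add_left_cancel_less)
  qed
  then have "emeasure lborel {t. ennreal l < dyadic_maximal h t}
      \<le> emeasure lborel {t. ennreal (l / 2) < dyadic_maximal H t}"
    by (rule emeasure_mono) measurable
  also have "\<dots> \<le> ennreal (5 / (l / 2)) * (\<integral>\<^sup>+u. H u \<partial>lborel)"
    by (rule dyadic_maximal_weak_type) (use True in auto)
  finally have "ennreal (2 * l) * emeasure lborel {t. ennreal l < dyadic_maximal h t}
      \<le> ennreal (2 * l) * (ennreal (5 / (l / 2)) * (\<integral>\<^sup>+u. H u \<partial>lborel))"
    by (rule mult_left_mono) auto
  also have "\<dots> = 20 * (indicator {0<..} l * (\<integral>\<^sup>+u. H u \<partial>lborel))"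
    using True by (simp add: mult.assoc[symmetric] ennreal_mult[symmetric])
  finally show ?thesis unfolding H_def .
qed (simp add: ennreal_neg)

lemma nn_integral_upper_part_le:
  fixes y :: ennreal
  shows "(\<integral>\<^sup>+l. indicator {0<..} l * (y * indicator {l. ennreal (l / 2) < y} l) \<partial>lborel) \<le> 2 * y\<^sup>2"
proof (cases y)
  case (real c)
  have "(\<integral>\<^sup>+l. indicator {0<..} l * (y * indicator {l. ennreal (l / 2) < y} l) \<partial>lborel)
      \<le> (\<integral>\<^sup>+l. y * indicator {0..2 * c} l \<partial>lborel)"
    by (rule nn_integral_mono) (auto simp: indicator_def real ennreal_less_iff)
  also have "\<dots> = y * ennreal (2 * c)"
    using real by (subst nn_integral_cmult_indicator) auto
  also have "\<dots> = 2 * y\<^sup>2"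
    using real by (simp add: ennreal_mult power2_eq_square mult_ac)
  finally show ?thesis .
qed (simp add: ennreal_mult_top)

text \<open>Marcinkiewicz interpolation between the weak type (1,1) bound and the trivial
  \<open>L\<^sup>\<infinity>\<close> bound, written out with the layer-cake formula.\<close>

theorem dyadic_maximal_L2:
  assumes h [measurable]: "h \<in> borel_measurable borel"
  shows "(\<integral>\<^sup>+t. (dyadic_maximal h t)\<^sup>2 \<partial>lborel) \<le> 40 * (\<integral>\<^sup>+t. (h t)\<^sup>2 \<partial>lborel)"
proof -
  define H where "H l u = h u * indicator {u. ennreal (l / 2) < h u} u" for l u
  have [measurable]: "case_prod H \<in> borel_measurable (lborel \<Otimes>\<^sub>M lborel)"
    unfolding H_def by measurable
  have "(\<integral>\<^sup>+t. (dyadic_maximal h t)\<^sup>2 \<partial>lborel)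
      \<le> (\<integral>\<^sup>+t. \<integral>\<^sup>+l. ennreal (2 * l) * indicator {l. ennreal l < dyadic_maximal h t} l \<partial>lborel \<partial>lborel)"
    by (intro nn_integral_mono square_le_nn_integral_layers)
  also have "\<dots> = (\<integral>\<^sup>+l. \<integral>\<^sup>+t. ennreal (2 * l) * indicator {t. ennreal l < dyadic_maximal h t} t \<partial>lborel \<partial>lborel)"
    by (subst lborel_pair.Fubini') (measurable, auto intro!: nn_integral_cong simp: indicator_def)
  also have "\<dots> = (\<integral>\<^sup>+l. ennreal (2 * l) * emeasure lborel {t. ennreal l < dyadic_maximal h t} \<partial>lborel)"
    by (intro nn_integral_cong) (simp add: nn_integral_cmult)
  also have "\<dots> \<le> (\<integral>\<^sup>+l. 20 * (indicator {0<..} l * (\<integral>\<^sup>+u. H l u \<partial>lborel)) \<partial>lborel)"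
    unfolding H_def by (intro nn_integral_mono dyadic_maximal_level_set_le h)
  also have "\<dots> = 20 * (\<integral>\<^sup>+l. \<integral>\<^sup>+u. indicator {0<..} l * H l u \<partial>lborel \<partial>lborel)"
    by (simp add: nn_integral_cmult)
  also have "\<dots> = 20 * (\<integral>\<^sup>+u. \<integral>\<^sup>+l. indicator {0<..} l * H l u \<partial>lborel \<partial>lborel)"
    by (subst lborel_pair.Fubini') measurable
  also have "\<dots> \<le> 20 * (\<integral>\<^sup>+u. 2 * (h u)\<^sup>2 \<partial>lborel)"
  proof (intro mult_left_mono nn_integral_mono)
    fix u
    have "(\<integral>\<^sup>+l. indicator {0<..} l * H l u \<partial>lborel)
        = (\<integral>\<^sup>+l. indicator {0<..} l * (h u * indicator {l. ennreal (l / 2) < h u} l) \<partial>lborel)"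
      by (intro nn_integral_cong) (simp add: H_def indicator_def)
    then show "(\<integral>\<^sup>+l. indicator {0<..} l * H l u \<partial>lborel) \<le> 2 * (h u)\<^sup>2"
      using nn_integral_upper_part_le[of "h u"] by simp
  qed simp
  finally show ?thesis
    by (simp add: nn_integral_cmult mult.assoc[symmetric])
qed

section \<open>The strong maximal function\<close>

text \<open>The factor 2 pays for rounding an arbitrary radius up to a dyadic one.\<close>

definition dir_maximal :: "'a::euclidean_space \<Rightarrow> ('a \<Rightarrow> ennreal) \<Rightarrow> 'a \<Rightarrow> ennreal" where
  "dir_maximal b H x = 2 * dyadic_maximal (\<lambda>s. H (x + s *\<^sub>R b)) 0"

lemma dir_maximal_measurable [measurable]:
  assumes [measurable]: "H \<in> borel_measurable borel"
  shows "dir_maximal b H \<in> borel_measurable borel"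
  unfolding dir_maximal_def dyadic_maximal_def dyadic_avg_def by measurable

lemma dir_maximal_shift: "dir_maximal b H (z + t *\<^sub>R b) = 2 * dyadic_maximal (\<lambda>s. H (z + s *\<^sub>R b)) t"
  unfolding dir_maximal_def dyadic_maximal_def dyadic_avg_def
  by (intro arg_cong2[where f="(*)"] refl SUP_cong arg_cong2[where f="(*)"] nn_integral_cong)
     (simp add: algebra_simps)

lemma nn_integral_lborel_slice:
  fixes F :: "'a::euclidean_space \<Rightarrow> ennreal"
  assumes [measurable]: "F \<in> borel_measurable borel" and i: "i \<in> Basis"
  shows "(\<integral>\<^sup>+x. F x \<partial>lborel) =
    (\<integral>\<^sup>+f. \<integral>\<^sup>+t. F ((\<Sum>b\<in>Basis-{i}. f b *\<^sub>R b) + t *\<^sub>R i) \<partial>lborel \<partial>(\<Pi>\<^sub>M b\<in>Basis-{i}. lborel))"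
proof -
  interpret product_sigma_finite "\<lambda>_::'a. lborel :: real measure" by standard
  have B: "Basis = insert i (Basis - {i})" using i by auto
  have "(\<integral>\<^sup>+x. F x \<partial>lborel) = (\<integral>\<^sup>+f. F (\<Sum>b\<in>Basis. f b *\<^sub>R b) \<partial>(\<Pi>\<^sub>M b\<in>Basis. lborel))"
    by (subst lborel_eq[where 'a='a]) (simp add: nn_integral_distr)
  also have "\<dots> = (\<integral>\<^sup>+f. F (\<Sum>b\<in>Basis. f b *\<^sub>R b) \<partial>(\<Pi>\<^sub>M b\<in>insert i (Basis-{i}). lborel))"
    using B by simp
  also have "\<dots> = (\<integral>\<^sup>+f. \<integral>\<^sup>+t. F (\<Sum>b\<in>Basis. (f(i:=t)) b *\<^sub>R b) \<partial>lborel \<partial>(\<Pi>\<^sub>M b\<in>Basis-{i}. lborel))"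
    by (subst product_nn_integral_insert) (auto simp: B[symmetric])
  also have "\<dots> = (\<integral>\<^sup>+f. \<integral>\<^sup>+t. F ((\<Sum>b\<in>Basis-{i}. f b *\<^sub>R b) + t *\<^sub>R i) \<partial>lborel \<partial>(\<Pi>\<^sub>M b\<in>Basis-{i}. lborel))"
  proof (intro nn_integral_cong arg_cong[where f=F])
    fix f t
    have "(\<Sum>b\<in>Basis. (f(i:=t)) b *\<^sub>R b) = t *\<^sub>R i + (\<Sum>b\<in>Basis-{i}. (f(i:=t)) b *\<^sub>R b)"
      using i by (subst sum.remove[of _ i]) auto
    also have "(\<Sum>b\<in>Basis-{i}. (f(i:=t)) b *\<^sub>R b) = (\<Sum>b\<in>Basis-{i}. f b *\<^sub>R b)"
      by (intro sum.cong) auto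
    finally show "(\<Sum>b\<in>Basis. (f(i:=t)) b *\<^sub>R b) = (\<Sum>b\<in>Basis-{i}. f b *\<^sub>R b) + t *\<^sub>R i"
      by simp
  qed
  finally show ?thesis .
qed

lemma dir_maximal_L2:
  assumes [measurable]: "H \<in> borel_measurable borel" and b: "b \<in> Basis"
  shows "(\<integral>\<^sup>+x. (dir_maximal b H x)\<^sup>2 \<partial>lborel) \<le> 160 * (\<integral>\<^sup>+x. (H x)\<^sup>2 \<partial>lborel)"
proof -
  let ?P = "\<Pi>\<^sub>M c\<in>Basis-{b}. lborel" and ?z = "\<lambda>f. \<Sum>c\<in>Basis-{b}. f c *\<^sub>R c"
  have "(\<integral>\<^sup>+x. (dir_maximal b H x)\<^sup>2 \<partial>lborel)
      = (\<integral>\<^sup>+f. \<integral>\<^sup>+t. (dir_maximal b H (?z f + t *\<^sub>R b))\<^sup>2 \<partial>lborel \<partial>?P)"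
    by (rule nn_integral_lborel_slice[OF _ b]) measurable
  also have "\<dots> = (\<integral>\<^sup>+f. 4 * \<integral>\<^sup>+t. (dyadic_maximal (\<lambda>s. H (?z f + s *\<^sub>R b)) t)\<^sup>2 \<partial>lborel \<partial>?P)"
    unfolding dir_maximal_shift
    by (intro nn_integral_cong) (simp add: nn_integral_cmult power_mult_distrib)
  also have "\<dots> \<le> (\<integral>\<^sup>+f. 4 * (40 * \<integral>\<^sup>+t. (H (?z f + t *\<^sub>R b))\<^sup>2 \<partial>lborel) \<partial>?P)"
    by (intro nn_integral_mono mult_left_mono dyadic_maximal_L2) auto
  also have "\<dots> = 160 * (\<integral>\<^sup>+f. \<integral>\<^sup>+t. (H (?z f + t *\<^sub>R b))\<^sup>2 \<partial>lborel \<partial>?P)"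
    by (subst nn_integral_cmult[symmetric]) (auto simp: mult.assoc)
  also have "\<dots> = 160 * (\<integral>\<^sup>+x. (H x)\<^sup>2 \<partial>lborel)"
    by (subst nn_integral_lborel_slice[OF _ b]) auto
  finally show ?thesis .
qed

lemma foldr_dir_maximal_measurable [measurable]:
  assumes [measurable]: "H \<in> borel_measurable borel"
  shows "foldr dir_maximal bs H \<in> borel_measurable borel"
  by (induction bs) auto

lemma foldr_dir_maximal_L2:
  assumes [measurable]: "H \<in> borel_measurable borel" and "set bs \<subseteq> Basis"
  shows "(\<integral>\<^sup>+x. (foldr dir_maximal bs H x)\<^sup>2 \<partial>lborel) \<le> 160 ^ length bs * (\<integral>\<^sup>+x. (H x)\<^sup>2 \<partial>lborel)"
  using assms(2)
proof (induction bs)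
  case (Cons b bs)
  have "(\<integral>\<^sup>+x. (foldr dir_maximal (b # bs) H x)\<^sup>2 \<partial>lborel)
      \<le> 160 * (\<integral>\<^sup>+x. (foldr dir_maximal bs H x)\<^sup>2 \<partial>lborel)"
    using Cons.prems by (simp add: dir_maximal_L2)
  also have "\<dots> \<le> 160 * (160 ^ length bs * (\<integral>\<^sup>+x. (H x)\<^sup>2 \<partial>lborel))"
    using Cons by (intro mult_left_mono) auto
  finally show ?case by (simp add: mult.assoc)
qed simp


lemma dyadic_round_up:
  assumes r: "0 < r"
  obtains n :: int where "r \<le> 2 powr n" "2 powr n < 2 * r"
proof
  have "r = 2 powr (log 2 r)" using r by simp
  also have "\<dots> \<le> 2 powr \<lceil>log 2 r\<rceil>" by (intro powr_mono) auto
  finally show "r \<le> 2 powr \<lceil>log 2 r\<rceil>" .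
  have "2 powr \<lceil>log 2 r\<rceil> < 2 powr (log 2 r + 1)" by simp linarith
  also have "\<dots> = 2 * r" using r by (simp add: powr_add)
  finally show "2 powr \<lceil>log 2 r\<rceil> < 2 * r" .
qed

lemma interval_avg_le_dir_maximal:
  assumes [measurable]: "G \<in> borel_measurable borel" and r: "0 < r"
  shows "(\<integral>\<^sup>+t. ennreal (indicator {-r..r} t / (2 * r)) * G (x - t *\<^sub>R b) \<partial>lborel) \<le> dir_maximal b G x"
proof -
  obtain n :: int where r_le: "r \<le> 2 powr n" and r_gt: "2 powr n < 2 * r"
    using dyadic_round_up[OF r] .
  have "(\<integral>\<^sup>+t. ennreal (indicator {-r..r} t / (2 * r)) * G (x - t *\<^sub>R b) \<partial>lborel)
      \<le> (\<integral>\<^sup>+t. ennreal (2 * (1 / 2 powr (real_of_int n + 1))) *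
            (indicator {-(2 powr n)..2 powr n} t * G (x + (0 - t) *\<^sub>R b)) \<partial>lborel)"
  proof (rule nn_integral_mono)
    fix t
    have "indicator {-r..r} t / (2 * r)
        \<le> 2 * (1 / 2 powr (real_of_int n + 1)) * (indicator {-(2 powr n)..2 powr n} t :: real)"
    proof (cases "t \<in> {-r..r}")
      case True
      then have "t \<in> {-(2 powr n)..2 powr n}" using r_le by auto
      moreover have "1 / (2 * r) \<le> 2 * (1 / 2 powr (real_of_int n + 1))"
        using r_gt r by (simp add: powr_add field_simps)
      ultimately show ?thesis using True by simp
    qed simp
    then show "ennreal (indicator {-r..r} t / (2 * r)) * G (x - t *\<^sub>R b)
      \<le> ennreal (2 * (1 / 2 powr (real_of_int n + 1))) *
          (indicator {-(2 powr n)..2 powr n} t * G (x + (0 - t) *\<^sub>R b))"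
      by (auto simp: indicator_def ennreal_leI mult.assoc[symmetric] intro!: mult_right_mono)
  qed
  also have "\<dots> = 2 * dyadic_avg (\<lambda>s. G (x + s *\<^sub>R b)) n 0"
  proof -
    have "ennreal (2 * (1 / 2 powr (real_of_int n + 1))) = 2 * ennreal (1 / 2 powr (real_of_int n + 1))"
      by (subst ennreal_mult) auto
    then show ?thesis
      unfolding dyadic_avg_def by (subst nn_integral_cmult) (auto simp: mult.assoc)
  qed
  also have "\<dots> \<le> dir_maximal b G x"
    unfolding dir_maximal_def dyadic_maximal_def by (intro mult_left_mono SUP_upper) auto
  finally show ?thesis .
qed

lemma product_avg_le_foldr_dir_maximal:
  fixes G :: "'a::euclidean_space \<Rightarrow> ennreal"
  assumes [measurable]: "G \<in> borel_measurable borel"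
    and "distinct bs" "set bs \<subseteq> Basis" "\<And>b. b \<in> set bs \<Longrightarrow> 0 < r b"
  shows "(\<integral>\<^sup>+f. G (x - (\<Sum>b\<in>set bs. f b *\<^sub>R b)) * (\<Prod>b\<in>set bs. ennreal (indicator {-r b..r b} (f b) / (2 * r b)))
       \<partial>(\<Pi>\<^sub>M b\<in>set bs. lborel)) \<le> foldr dir_maximal bs G x"
  using assms(2-)
proof (induction bs arbitrary: x)
  case Nil
  show ?case by (simp add: PiM_empty nn_integral_count_space_finite)
next
  case (Cons b bs)
  interpret product_sigma_finite "\<lambda>_::'a. lborel :: real measure" by standard
  define \<phi> where "\<phi> c t = ennreal (indicator {-r c..r c} t / (2 * r c))" for c t
  have [measurable]: "\<phi> c \<in> borel_measurable borel" for c unfolding \<phi>_def by measurable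
  have b: "b \<notin> set bs" using Cons.prems by auto
  have split: "G (x - (\<Sum>c\<in>insert b (set bs). (f(b:=t)) c *\<^sub>R c)) * (\<Prod>c\<in>insert b (set bs). \<phi> c ((f(b:=t)) c))
      = \<phi> b t * (G ((x - t *\<^sub>R b) - (\<Sum>c\<in>set bs. f c *\<^sub>R c)) * (\<Prod>c\<in>set bs. \<phi> c (f c)))" for f t
  proof -
    have "(\<Sum>c\<in>set bs. (if c = b then t else f c) *\<^sub>R c) = (\<Sum>c\<in>set bs. f c *\<^sub>R c)"
         "(\<Prod>c\<in>set bs. \<phi> c (if c = b then t else f c)) = (\<Prod>c\<in>set bs. \<phi> c (f c))"
      using b by (auto intro!: sum.cong prod.cong)
    then show ?thesis using b by (simp add: algebra_simps)
  qed
  have "(\<integral>\<^sup>+f. G (x - (\<Sum>c\<in>set (b # bs). f c *\<^sub>R c)) * (\<Prod>c\<in>set (b # bs). \<phi> c (f c)) \<partial>(\<Pi>\<^sub>M c\<in>set (b # bs). lborel))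
     = (\<integral>\<^sup>+t. \<integral>\<^sup>+f. G (x - (\<Sum>c\<in>insert b (set bs). (f(b:=t)) c *\<^sub>R c)) *
          (\<Prod>c\<in>insert b (set bs). \<phi> c ((f(b:=t)) c)) \<partial>(\<Pi>\<^sub>M c\<in>set bs. lborel) \<partial>lborel)"
    unfolding list.set(2) by (rule product_nn_integral_insert_rev) (auto simp: b)
  also have "\<dots> = (\<integral>\<^sup>+t. \<phi> b t * \<integral>\<^sup>+f. G ((x - t *\<^sub>R b) - (\<Sum>c\<in>set bs. f c *\<^sub>R c)) *
          (\<Prod>c\<in>set bs. \<phi> c (f c)) \<partial>(\<Pi>\<^sub>M c\<in>set bs. lborel) \<partial>lborel)"
    unfolding split by (intro nn_integral_cong nn_integral_cmult) measurable
  also have "\<dots> \<le> (\<integral>\<^sup>+t. \<phi> b t * foldr dir_maximal bs G (x - t *\<^sub>R b) \<partial>lborel)"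
    using Cons.IH[unfolded \<phi>_def[symmetric]] Cons.prems by (intro nn_integral_mono mult_left_mono) auto
  also have "\<dots> \<le> dir_maximal b (foldr dir_maximal bs G) x"
    unfolding \<phi>_def by (rule interval_avg_le_dir_maximal) (use Cons.prems in auto)
  finally show ?case unfolding \<phi>_def by simp
qed


definition box_kernel :: "'a::euclidean_space \<Rightarrow> 'a \<Rightarrow> real" where
  "box_kernel v w = indicator (cbox (-v) v) w / measure lborel (cbox (-v) v)"

lemma box_kernel_measurable [measurable]: "box_kernel v \<in> borel_measurable borel"
  unfolding box_kernel_def by measurable

lemma box_kernel_coordinates:
  assumes v: "\<And>b. b \<in> Basis \<Longrightarrow> 0 < v \<bullet> b"
  shows "ennreal (box_kernel v (\<Sum>b\<in>Basis. f b *\<^sub>R b))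
    = (\<Prod>b\<in>Basis. ennreal (indicator {-(v \<bullet> b)..v \<bullet> b} (f b) / (2 * (v \<bullet> b))))"
proof -
  let ?y = "\<Sum>b\<in>Basis. f b *\<^sub>R b"
  have measure: "measure lborel (cbox (-v) v) = (\<Prod>b\<in>Basis. 2 * (v \<bullet> b))"
    using v by (subst measure_lborel_cbox_eq)
      (auto simp: inner_diff_left inner_add_left less_imp_le intro!: prod.cong)
  have "box_kernel v ?y = (\<Prod>b\<in>Basis. indicator {-(v \<bullet> b)..v \<bullet> b} (f b) / (2 * (v \<bullet> b)))"
  proof (cases "?y \<in> cbox (-v) v")
    case True
    then have "\<forall>b\<in>Basis. f b \<in> {-(v \<bullet> b)..v \<bullet> b}" by (auto simp: mem_box)
    then show ?thesis using True unfolding box_kernel_def measure by (simp add: prod_dividef)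
  next
    case False
    then obtain c where "c \<in> Basis" "f c \<notin> {-(v \<bullet> c)..v \<bullet> c}"
      by (auto simp: mem_box)
    then have "(\<Prod>b\<in>Basis. indicator {-(v \<bullet> b)..v \<bullet> b} (f b) / (2 * (v \<bullet> b))) = (0::real)"
      by (intro prod_zero bexI[of _ c]) auto
    then show ?thesis using False unfolding box_kernel_def by simp
  qed
  then show ?thesis by (subst prod_ennreal) (auto intro!: divide_nonneg_pos v)
qed

definition basis_list :: "'a::euclidean_space list" where
  "basis_list = (SOME bs. distinct bs \<and> set bs = Basis)"

lemma basis_list: "distinct (basis_list :: 'a::euclidean_space list)" "set (basis_list :: 'a list) = Basis"
proof -
  have "\<exists>bs. distinct bs \<and> set bs = (Basis :: 'a set)"
    using finite_distinct_list[OF finite_Basis] by metis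
  from someI_ex[OF this] show "distinct (basis_list :: 'a list)" "set (basis_list :: 'a list) = Basis"
    unfolding basis_list_def by auto
qed

definition strong_maximal :: "('a::euclidean_space \<Rightarrow> ennreal) \<Rightarrow> 'a \<Rightarrow> ennreal" where
  "strong_maximal H = foldr dir_maximal basis_list H"

lemma strong_maximal_measurable [measurable]:
  assumes [measurable]: "H \<in> borel_measurable borel"
  shows "strong_maximal H \<in> borel_measurable borel"
  unfolding strong_maximal_def by measurable

lemma strong_maximal_L2:
  assumes [measurable]: "H \<in> borel_measurable borel"
  shows "(\<integral>\<^sup>+x. (strong_maximal H x)\<^sup>2 \<partial>lborel) \<le> 160 ^ DIM('a) * (\<integral>\<^sup>+x. (H x)\<^sup>2 \<partial>(lborel :: 'a::euclidean_space measure))"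
proof -
  have "length (basis_list :: 'a list) = DIM('a)"
    by (metis basis_list distinct_card)
  then show ?thesis
    using foldr_dir_maximal_L2[of H "basis_list :: 'a list"] basis_list unfolding strong_maximal_def by auto
qed

lemma box_avg_le_strong_maximal:
  fixes G :: "'a::euclidean_space \<Rightarrow> ennreal"
  assumes [measurable]: "G \<in> borel_measurable borel" and v: "\<And>b. b \<in> Basis \<Longrightarrow> 0 < v \<bullet> b"
  shows "(\<integral>\<^sup>+w. ennreal (box_kernel v w) * G (x - w) \<partial>lborel) \<le> strong_maximal G x"
proof -
  have "(\<integral>\<^sup>+w. ennreal (box_kernel v w) * G (x - w) \<partial>lborel)
      = (\<integral>\<^sup>+f. ennreal (box_kernel v (\<Sum>b\<in>Basis. f b *\<^sub>R b)) * G (x - (\<Sum>b\<in>Basis. f b *\<^sub>R b)) \<partial>(\<Pi>\<^sub>M b\<in>Basis. lborel))"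
    by (subst lborel_eq[where 'a='a]) (simp add: nn_integral_distr)
  also have "\<dots> = (\<integral>\<^sup>+f. G (x - (\<Sum>b\<in>set basis_list. f b *\<^sub>R b)) *
      (\<Prod>b\<in>set basis_list. ennreal (indicator {-(v \<bullet> b)..v \<bullet> b} (f b) / (2 * (v \<bullet> b)))) \<partial>(\<Pi>\<^sub>M b\<in>set basis_list. lborel))"
    unfolding basis_list(2) by (intro nn_integral_cong) (simp add: box_kernel_coordinates v mult.commute)
  also have "\<dots> \<le> strong_maximal G x"
    unfolding strong_maximal_def by (rule product_avg_le_foldr_dir_maximal) (use basis_list v in auto)
  finally show ?thesis .
qed

lemma strong_maximal_pow_measurable [measurable]:
  assumes [measurable]: "H \<in> borel_measurable borel"
  shows "(strong_maximal ^^ n) H \<in> borel_measurable borel"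
  by (induction n) auto

lemma strong_maximal_pow_L2:
  assumes [measurable]: "H \<in> borel_measurable borel"
  shows "(\<integral>\<^sup>+x. ((strong_maximal ^^ n) H x)\<^sup>2 \<partial>lborel)
    \<le> (160 ^ DIM('a)) ^ n * (\<integral>\<^sup>+x. (H x)\<^sup>2 \<partial>(lborel :: 'a::euclidean_space measure))"
proof (induction n)
  case (Suc n)
  have "(\<integral>\<^sup>+x. ((strong_maximal ^^ Suc n) H x)\<^sup>2 \<partial>lborel)
      \<le> 160 ^ DIM('a) * (\<integral>\<^sup>+x. ((strong_maximal ^^ n) H x)\<^sup>2 \<partial>(lborel :: 'a measure))"
    by (simp add: strong_maximal_L2)
  also have "\<dots> \<le> 160 ^ DIM('a) * ((160 ^ DIM('a)) ^ n * (\<integral>\<^sup>+x. (H x)\<^sup>2 \<partial>(lborel :: 'a measure)))"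
    by (intro mult_left_mono Suc) auto
  finally show ?case by (simp add: mult.assoc)
qed simp

section \<open>Convolution products of bump functions\<close>

lemma nn_integral_lborel_translate:
  fixes F :: "'a::euclidean_space \<Rightarrow> ennreal"
  assumes [measurable]: "F \<in> borel_measurable borel"
  shows "(\<integral>\<^sup>+y. F (z + y) \<partial>lborel) = (\<integral>\<^sup>+y. F y \<partial>lborel)"
  by (subst lborel_distr_plus[symmetric, of z]) (simp add: nn_integral_distr)

lemma nn_integral_lborel_reflect:
  fixes F :: "'a::euclidean_space \<Rightarrow> ennreal"
  assumes [measurable]: "F \<in> borel_measurable borel"
  shows "(\<integral>\<^sup>+y. F (x - y) \<partial>lborel) = (\<integral>\<^sup>+y. F y \<partial>lborel)"
  by (subst (2) lborel_affine[of "-1" x]) (simp_all add: density_1 nn_integral_distr)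

lemma integral_lborel_reflect:
  fixes F :: "'a::euclidean_space \<Rightarrow> 'b::{banach, second_countable_topology}"
  assumes [measurable]: "F \<in> borel_measurable borel"
  shows "(\<integral>y. F (x - y) \<partial>lborel) = (\<integral>y. F y \<partial>lborel)"
  by (subst (2) lborel_affine[of "-1" x]) (simp_all add: density_1 integral_distr)

fun box_conv :: "'a::euclidean_space list \<Rightarrow> 'a \<Rightarrow> ennreal" where
  "box_conv [] = (\<lambda>_. 0)"
| "box_conv [v] = (\<lambda>y. ennreal (box_kernel v y))"
| "box_conv (v # w # ws) = (\<lambda>y. \<integral>\<^sup>+z. ennreal (box_kernel v (y - z)) * box_conv (w # ws) z \<partial>lborel)"

lemma box_conv_measurable [measurable]: "box_conv vs \<in> borel_measurable borel"
  by (induction vs rule: box_conv.induct) auto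

lemma box_conv_avg_le_strong_maximal_pow:
  fixes vs :: "'a::euclidean_space list"
  assumes "vs \<noteq> []" "\<And>v b. v \<in> set vs \<Longrightarrow> b \<in> Basis \<Longrightarrow> 0 < v \<bullet> b"
    and "H \<in> borel_measurable borel"
  shows "(\<integral>\<^sup>+y. box_conv vs y * H (x - y) \<partial>lborel) \<le> (strong_maximal ^^ length vs) H x"
  using assms
proof (induction vs arbitrary: x H rule: box_conv.induct)
  case (2 v)
  then show ?case using box_avg_le_strong_maximal[of H v x] by simp
next
  case (3 v w ws)
  note [measurable] = "3.prems"(3)
  let ?D = "box_conv (w # ws)"
  have "(\<integral>\<^sup>+y. box_conv (v # w # ws) y * H (x - y) \<partial>lborel)
      = (\<integral>\<^sup>+y. \<integral>\<^sup>+z. ennreal (box_kernel v (y - z)) * ?D z * H (x - y) \<partial>lborel \<partial>lborel)"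
    by (simp add: nn_integral_multc)
  also have "\<dots> = (\<integral>\<^sup>+z. \<integral>\<^sup>+y. ennreal (box_kernel v (y - z)) * ?D z * H (x - y) \<partial>lborel \<partial>lborel)"
    by (rule lborel_pair.Fubini') measurable
  also have "\<dots> = (\<integral>\<^sup>+z. ?D z * \<integral>\<^sup>+u. ennreal (box_kernel v u) * H ((x - z) - u) \<partial>lborel \<partial>lborel)"
  proof (rule nn_integral_cong)
    fix z
    have "(\<integral>\<^sup>+y. ennreal (box_kernel v (y - z)) * ?D z * H (x - y) \<partial>lborel)
        = (\<integral>\<^sup>+u. ennreal (box_kernel v ((z + u) - z)) * ?D z * H (x - (z + u)) \<partial>lborel)"
      by (rule nn_integral_lborel_translate[symmetric]) measurable
    also have "\<dots> = ?D z * \<integral>\<^sup>+u. ennreal (box_kernel v u) * H ((x - z) - u) \<partial>lborel"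
      by (subst nn_integral_cmult[symmetric]) (auto intro!: nn_integral_cong simp: algebra_simps)
    finally show "(\<integral>\<^sup>+y. ennreal (box_kernel v (y - z)) * ?D z * H (x - y) \<partial>lborel) = \<dots>" .
  qed
  also have "\<dots> \<le> (\<integral>\<^sup>+z. ?D z * strong_maximal H (x - z) \<partial>lborel)"
    using "3.prems" by (intro nn_integral_mono mult_left_mono box_avg_le_strong_maximal) auto
  also have "\<dots> \<le> (strong_maximal ^^ length (w # ws)) (strong_maximal H) x"
    by (rule "3.IH") (use "3.prems" in auto)
  also have "\<dots> = (strong_maximal ^^ length (v # w # ws)) H x"
    by (simp add: funpow_swap1)
  finally show ?case .
qed simp

lemma norm_integral_le_nn_integral:
  fixes f :: "'a \<Rightarrow> 'b::{banach, second_countable_topology}"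
  shows "ennreal (norm (integral\<^sup>L M f)) \<le> (\<integral>\<^sup>+x. norm (f x) \<partial>M)"
  by (cases "integrable M f") (auto simp: integral_norm_bound_ennreal not_integrable_integral_eq)

lemma norm_conv_prod_le_box_conv:
  fixes bs :: "('a::euclidean_space \<Rightarrow> complex) list"
  assumes "list_all2 (\<lambda>b v. \<forall>y. norm (b y) \<le> box_kernel v y) bs vs"
  shows "ennreal (norm (conv_prod bs y)) \<le> box_conv vs y"
  using assms
proof (induction bs arbitrary: vs y rule: conv_prod.induct)
  case (2 b)
  then show ?case by (cases vs) (auto simp: ennreal_leI)
next
  case (3 b c cs)
  then obtain v w ws where vs: "vs = v # w # ws" and b: "\<forall>y. norm (b y) \<le> box_kernel v y"
      and cs: "list_all2 (\<lambda>b v. \<forall>y. norm (b y) \<le> box_kernel v y) (c # cs) (w # ws)"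
    by (cases vs; cases "tl vs") auto
  have "ennreal (norm (conv_prod (b # c # cs) y)) \<le> (\<integral>\<^sup>+z. norm (b (y - z) * conv_prod (c # cs) z) \<partial>lebesgue)"
    unfolding conv_prod.simps conv_def by (rule norm_integral_le_nn_integral)
  also have "\<dots> \<le> (\<integral>\<^sup>+z. ennreal (box_kernel v (y - z)) * box_conv (w # ws) z \<partial>lebesgue)"
    using b "3.IH"[OF cs]
    by (intro nn_integral_mono) (auto simp: norm_mult ennreal_mult intro!: mult_mono ennreal_leI)
  also have "\<dots> = box_conv vs y"
    unfolding vs by (simp add: nn_integral_completion)
  finally show ?case .
qed simp

lemma conv_prod_bumps_le_box_conv:
  fixes bs :: "('a::euclidean_space \<Rightarrow> complex) list"
  assumes "\<forall>b\<in>set bs. bump b"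
  obtains vs where "length vs = length bs" "\<forall>v\<in>set vs. \<forall>i\<in>Basis. 0 < v \<bullet> i"
    "\<And>y. ennreal (norm (conv_prod bs y)) \<le> box_conv vs y"
proof -
  have "\<forall>b\<in>set bs. \<exists>v. (\<forall>i\<in>Basis. 0 < v \<bullet> i) \<and> (\<forall>y. norm (b y) \<le> box_kernel v y)"
    using assms unfolding bump_def box_kernel_def by auto
  then obtain V where V: "\<And>b. b \<in> set bs \<Longrightarrow> (\<forall>i\<in>Basis. 0 < V b \<bullet> i) \<and> (\<forall>y. norm (b y) \<le> box_kernel (V b) y)"
    by metis
  have "list_all2 (\<lambda>b v. \<forall>y. norm (b y) \<le> box_kernel v y) bs (map V bs)"
    using V by (simp add: list_all2_map2 list_all2_same)
  then show ?thesis
    using V norm_conv_prod_le_box_conv by (intro that[of "map V bs"]) auto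
qed

section \<open>Gaussians and the Plancherel inequality\<close>

lemma borel_measurable_cis [measurable]: "cis \<in> borel_measurable borel"
  by (intro borel_measurable_continuous_onI continuous_intros)

lemma borel_measurable_cnj [measurable]: "cnj \<in> borel_measurable borel"
  by (intro borel_measurable_continuous_onI continuous_intros)

lemma cis_sum: "finite I \<Longrightarrow> cis (\<Sum>i\<in>I. f i) = (\<Prod>i\<in>I. cis (f i))"
  by (induction I rule: finite_induct) (auto simp: cis_mult[symmetric])

lemma normal_density_scaled:
  assumes "0 < e"
  shows "normal_density 0 (e / sqrt (2 * pi)) s = exp (- pi * s\<^sup>2 / e\<^sup>2) / e"
proof -
  have a: "2 * pi * (e / sqrt (2 * pi))\<^sup>2 = e\<^sup>2" and b: "2 * (e / sqrt (2 * pi))\<^sup>2 = e\<^sup>2 / pi"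
    by (simp_all add: power_divide real_sqrt_pow2)
  have "- s\<^sup>2 / (e\<^sup>2 / pi) = - pi * s\<^sup>2 / e\<^sup>2"
    by (simp add: field_simps)
  then show ?thesis
    unfolding normal_density_def a b using assms by simp
qed

lemma integrable_gauss_1d:
  assumes e: "0 < e"
  shows "integrable lborel (\<lambda>s. exp (- pi * e\<^sup>2 * s\<^sup>2))"
proof -
  have "(\<lambda>s. exp (- pi * e\<^sup>2 * s\<^sup>2)) = (\<lambda>s. (1 / e) * normal_density 0 ((1 / e) / sqrt (2 * pi)) s)"
  proof
    fix s
    show "exp (- pi * e\<^sup>2 * s\<^sup>2) = (1 / e) * normal_density 0 ((1 / e) / sqrt (2 * pi)) s"
      using e by (subst normal_density_scaled) (simp_all add: power_divide field_simps)
  qed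
  then show ?thesis
    using e by (simp add: integrable_normal_density)
qed

text \<open>Obtained by rescaling the characteristic function of the standard normal distribution.\<close>

lemma integral_gauss_cis_1d:
  assumes e: "0 < e"
  shows "(\<integral>s. complex_of_real (exp (- pi * e\<^sup>2 * s\<^sup>2)) * cis (2 * pi * t * s) \<partial>lborel)
    = complex_of_real (exp (- pi * t\<^sup>2 / e\<^sup>2) / e)"
    (is "?I = _")
proof -
  define c where "c = sqrt (2 * pi) * e"
  define \<theta> where "\<theta> = 2 * pi * t / c"
  have c: "c > 0" using e by (simp add: c_def)
  have "char std_normal_distribution \<theta> = complex_of_real (exp (-(\<theta>\<^sup>2) / 2))"
    by (simp add: char_std_normal_distribution)
  then have "complex_of_real (exp (-(\<theta>\<^sup>2) / 2)) = (\<integral>x. std_normal_density x *\<^sub>R iexp (\<theta> * x) \<partial>lborel)"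
    unfolding char_def by (subst (asm) integral_density) (auto simp: normal_density_nonneg)
  also have "\<dots> = c *\<^sub>R (\<integral>s. std_normal_density (c * s) *\<^sub>R iexp (\<theta> * (c * s)) \<partial>lborel)"
    using lborel_integral_real_affine[of c "\<lambda>x. std_normal_density x *\<^sub>R iexp (\<theta> * x)" 0] c by simp
  also have "(\<lambda>s. std_normal_density (c * s) *\<^sub>R iexp (\<theta> * (c * s)))
      = (\<lambda>s. (1 / sqrt (2 * pi)) *\<^sub>R (complex_of_real (exp (- pi * e\<^sup>2 * s\<^sup>2)) * cis (2 * pi * t * s)))"
  proof
    fix s
    have h1: "- (c * s)\<^sup>2 / 2 = - pi * e\<^sup>2 * s\<^sup>2"
      unfolding c_def by (simp add: power_mult_distrib real_sqrt_pow2)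
    have h2: "\<theta> * (c * s) = 2 * pi * t * s"
      unfolding \<theta>_def using c by (simp add: field_simps)
    show "std_normal_density (c * s) *\<^sub>R iexp (\<theta> * (c * s))
        = (1 / sqrt (2 * pi)) *\<^sub>R (complex_of_real (exp (- pi * e\<^sup>2 * s\<^sup>2)) * cis (2 * pi * t * s))"
      unfolding h2 std_normal_density_def h1 by (simp add: cis_conv_exp scaleR_conv_of_real)
  qed
  also have "c *\<^sub>R (\<integral>s. (1 / sqrt (2 * pi)) *\<^sub>R (complex_of_real (exp (- pi * e\<^sup>2 * s\<^sup>2)) * cis (2 * pi * t * s)) \<partial>lborel)
      = complex_of_real e * ?I"
    by (simp add: c_def scaleR_conv_of_real)
  finally have "complex_of_real (exp (-(\<theta>\<^sup>2) / 2)) = complex_of_real e * ?I" .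
  moreover have "\<theta>\<^sup>2 / 2 = pi * t\<^sup>2 / e\<^sup>2"
    unfolding \<theta>_def c_def using e by (simp add: power_mult_distrib power_divide field_simps power2_eq_square)
  then have "-(\<theta>\<^sup>2) / 2 = - pi * t\<^sup>2 / e\<^sup>2"
    by simp
  ultimately have D: "complex_of_real (exp (- pi * t\<^sup>2 / e\<^sup>2)) = complex_of_real e * ?I"
    by simp
  have "?I = complex_of_real (1 / e) * (complex_of_real e * ?I)"
    using e by simp
  also have "\<dots> = complex_of_real (exp (- pi * t\<^sup>2 / e\<^sup>2) / e)"
    unfolding D[symmetric] by simp
  finally show ?thesis .
qed

definition gauss_weight :: "real \<Rightarrow> 'a::euclidean_space \<Rightarrow> real" where
  "gauss_weight e \<xi> = exp (- pi * e\<^sup>2 * (norm \<xi>)\<^sup>2)"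

definition gauss_kernel :: "real \<Rightarrow> 'a::euclidean_space \<Rightarrow> real" where
  "gauss_kernel e u = (\<Prod>b\<in>Basis. normal_density 0 (e / sqrt (2 * pi)) (u \<bullet> b))"

lemma gauss_weight_measurable [measurable]: "gauss_weight e \<in> borel_measurable borel"
  unfolding gauss_weight_def by measurable

lemma gauss_kernel_measurable [measurable]: "gauss_kernel e \<in> borel_measurable borel"
  unfolding gauss_kernel_def by measurable

lemma gauss_kernel_nonneg: "0 \<le> gauss_kernel e u"
  unfolding gauss_kernel_def by (auto intro!: prod_nonneg normal_density_nonneg)

lemma gauss_weight_prod: "gauss_weight e \<xi> = (\<Prod>b\<in>Basis. exp (- pi * e\<^sup>2 * (\<xi> \<bullet> b)\<^sup>2))"
proof -
  have "(norm \<xi>)\<^sup>2 = (\<Sum>b\<in>Basis. (\<xi> \<bullet> b)\<^sup>2)"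
    unfolding power2_norm_eq_inner euclidean_inner[of \<xi> \<xi>] by (simp add: power2_eq_square)
  then show ?thesis
    unfolding gauss_weight_def by (simp add: exp_sum[symmetric] sum_distrib_left)
qed

lemma gauss_weight_coordinates:
  "gauss_weight e (\<Sum>b\<in>Basis. f b *\<^sub>R b) = (\<Prod>b\<in>Basis. exp (- pi * e\<^sup>2 * (f b)\<^sup>2))"
  unfolding gauss_weight_prod by (intro prod.cong refl) (simp add: inner_sum_left_Basis)

lemma nn_integral_gauss_kernel:
  assumes e: "0 < e"
  shows "(\<integral>\<^sup>+u. ennreal (gauss_kernel e u) \<partial>(lborel :: 'a::euclidean_space measure)) = 1"
proof -
  have "(\<integral>\<^sup>+u. ennreal (gauss_kernel e u) \<partial>(lborel :: 'a measure))
      = (\<integral>\<^sup>+u. (\<Prod>b\<in>Basis. ennreal (normal_density 0 (e / sqrt (2 * pi)) (u \<bullet> b))) \<partial>(lborel :: 'a measure))"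
    unfolding gauss_kernel_def by (subst prod_ennreal) (auto simp: normal_density_nonneg)
  also have "\<dots> = (\<Prod>b\<in>(Basis::'a set). (\<integral>\<^sup>+s. ennreal (normal_density 0 (e / sqrt (2 * pi)) s) \<partial>lborel))"
    by (rule nn_integral_lborel_prod) auto
  also have "(\<integral>\<^sup>+s. ennreal (normal_density 0 (e / sqrt (2 * pi)) s) \<partial>lborel) = 1"
    using e by (subst nn_integral_eq_integral) (auto simp: normal_density_nonneg integrable_normal_density)
  finally show ?thesis by simp
qed

lemma integrable_gauss_weight:
  assumes e: "0 < e"
  shows "integrable (lborel :: 'a::euclidean_space measure) (gauss_weight e)"
proof (rule integrableI_bounded)
  have "(\<integral>\<^sup>+\<xi>. ennreal (norm (gauss_weight e \<xi>)) \<partial>(lborel :: 'a measure))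
      = (\<integral>\<^sup>+\<xi>. (\<Prod>b\<in>Basis. ennreal (exp (- pi * e\<^sup>2 * (\<xi> \<bullet> b)\<^sup>2))) \<partial>(lborel :: 'a measure))"
    by (intro nn_integral_cong) (subst prod_ennreal, auto simp: gauss_weight_prod abs_prod)
  also have "\<dots> = (\<Prod>b\<in>(Basis::'a set). (\<integral>\<^sup>+s. ennreal (exp (- pi * e\<^sup>2 * s\<^sup>2)) \<partial>lborel))"
    by (rule nn_integral_lborel_prod) auto
  also have "(\<integral>\<^sup>+s. ennreal (exp (- pi * e\<^sup>2 * s\<^sup>2)) \<partial>lborel) = ennreal (\<integral>s. exp (- pi * e\<^sup>2 * s\<^sup>2) \<partial>lborel)"
    using integrable_gauss_1d[OF e] by (subst nn_integral_eq_integral) auto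
  finally show "(\<integral>\<^sup>+\<xi>. ennreal (norm (gauss_weight e \<xi>)) \<partial>(lborel :: 'a measure)) < \<infinity>"
    by (simp add: ennreal_power)
qed simp

definition inv_fourier :: "('a::euclidean_space \<Rightarrow> complex) \<Rightarrow> 'a \<Rightarrow> complex" where
  "inv_fourier g \<xi> = (\<integral>w. g w * cis (2 * pi * (w \<bullet> \<xi>)) \<partial>lborel)"

lemma inv_fourier_measurable [measurable]:
  assumes [measurable]: "g \<in> borel_measurable borel"
  shows "inv_fourier g \<in> borel_measurable borel"
  unfolding inv_fourier_def by measurable

lemma inv_fourier_gauss_weight:
  assumes e: "0 < e"
  shows "inv_fourier (\<lambda>\<xi>. complex_of_real (gauss_weight e \<xi>)) u = complex_of_real (gauss_kernel e (u::'a::euclidean_space))"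
proof -
  interpret product_sigma_finite "\<lambda>_::'a. lborel :: real measure" by standard
  have cis_coordinates: "cis (2 * pi * ((\<Sum>b\<in>Basis. f b *\<^sub>R b) \<bullet> u)) = (\<Prod>b\<in>Basis. cis (2 * pi * (u \<bullet> b) * f b))"
    for f :: "'a \<Rightarrow> real"
  proof -
    have "2 * pi * ((\<Sum>b\<in>Basis. f b *\<^sub>R b) \<bullet> u) = (\<Sum>b\<in>Basis. 2 * pi * (u \<bullet> b) * f b)"
      by (simp add: inner_sum_right sum_distrib_left inner_commute[of _ u] mult_ac)
    then show ?thesis by (simp only: cis_sum[OF finite_Basis])
  qed
  have integrable_1d: "integrable lborel (\<lambda>s. complex_of_real (exp (- pi * e\<^sup>2 * s\<^sup>2)) * cis (2 * pi * t * s))" for t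
    by (rule Bochner_Integration.integrable_bound[OF integrable_gauss_1d[OF e]]) (auto simp: norm_mult)
  have "inv_fourier (\<lambda>\<xi>. complex_of_real (gauss_weight e \<xi>)) u
      = (\<integral>f. complex_of_real (gauss_weight e (\<Sum>b\<in>Basis. f b *\<^sub>R b)) * cis (2 * pi * ((\<Sum>b\<in>Basis. f b *\<^sub>R b) \<bullet> u))
          \<partial>(\<Pi>\<^sub>M b\<in>Basis. lborel))"
    unfolding inv_fourier_def by (subst lborel_eq[where 'a='a], subst integral_distr) (auto, measurable)
  also have "\<dots> = (\<integral>f. (\<Prod>b\<in>Basis. complex_of_real (exp (- pi * e\<^sup>2 * (f b)\<^sup>2)) * cis (2 * pi * (u \<bullet> b) * f b))
      \<partial>(\<Pi>\<^sub>M b\<in>Basis. lborel))"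
    by (intro Bochner_Integration.integral_cong refl)
      (simp add: gauss_weight_coordinates cis_coordinates prod.distrib)
  also have "\<dots> = (\<Prod>b\<in>Basis. (\<integral>s. complex_of_real (exp (- pi * e\<^sup>2 * s\<^sup>2)) * cis (2 * pi * (u \<bullet> b) * s) \<partial>lborel))"
    by (rule product_integral_prod[where f="\<lambda>b s. complex_of_real (exp (- pi * e\<^sup>2 * s\<^sup>2)) * cis (2 * pi * (u \<bullet> b) * s)"])
      (simp, rule integrable_1d)
  also have "\<dots> = (\<Prod>b\<in>Basis. complex_of_real (exp (- pi * (u \<bullet> b)\<^sup>2 / e\<^sup>2) / e))"
    by (intro prod.cong refl integral_gauss_cis_1d[OF e])
  also have "\<dots> = complex_of_real (gauss_kernel e u)"
    unfolding gauss_kernel_def normal_density_scaled[OF e] by simp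
  finally show ?thesis .
qed


lemma (in pair_sigma_finite) integrable_tensor_bound:
  fixes u :: "'a \<times> 'b \<Rightarrow> 'c::{banach, second_countable_topology}"
    and f :: "'a \<Rightarrow> 'd::{banach, second_countable_topology}"
    and g :: "'b \<Rightarrow> 'e::{banach, second_countable_topology}"
  assumes f: "integrable M1 f" and g: "integrable M2 g" and [measurable]: "u \<in> borel_measurable (M1 \<Otimes>\<^sub>M M2)"
    and bound: "\<And>x y. norm (u (x, y)) \<le> norm (f x) * norm (g y)"
  shows "integrable (M1 \<Otimes>\<^sub>M M2) u"
proof (rule integrableI_bounded)
  have [measurable]: "f \<in> borel_measurable M1" "g \<in> borel_measurable M2"
    using f g by auto
  have "(\<integral>\<^sup>+p. norm (u p) \<partial>(M1 \<Otimes>\<^sub>M M2)) \<le> (\<integral>\<^sup>+p. ennreal (norm (f (fst p))) * ennreal (norm (g (snd p))) \<partial>(M1 \<Otimes>\<^sub>M M2))"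
  proof (rule nn_integral_mono)
    fix p :: "'a \<times> 'b"
    show "ennreal (norm (u p)) \<le> ennreal (norm (f (fst p))) * ennreal (norm (g (snd p)))"
      using bound[of "fst p" "snd p"] by (simp add: ennreal_mult[symmetric] ennreal_leI)
  qed
  also have "\<dots> = (\<integral>\<^sup>+x. \<integral>\<^sup>+y. ennreal (norm (f x)) * ennreal (norm (g y)) \<partial>M2 \<partial>M1)"
    by (subst M2.nn_integral_fst[symmetric]) auto
  also have "\<dots> = (\<integral>\<^sup>+x. norm (f x) \<partial>M1) * (\<integral>\<^sup>+y. norm (g y) \<partial>M2)"
    by (simp add: nn_integral_cmult nn_integral_multc)
  also have "\<dots> < \<infinity>"
    using f g by (simp add: integrable_iff_bounded ennreal_mult_less_top)
  finally show "(\<integral>\<^sup>+p. norm (u p) \<partial>(M1 \<Otimes>\<^sub>M M2)) < \<infinity>" .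
qed simp

lemma norm_inv_fourier_sq:
  fixes g :: "'a::euclidean_space \<Rightarrow> complex"
  assumes g: "integrable lborel g"
  shows "complex_of_real ((norm (inv_fourier g \<xi>))\<^sup>2)
    = (\<integral>p. g (fst p) * cnj (g (snd p)) * cis (2 * pi * ((fst p - snd p) \<bullet> \<xi>)) \<partial>(lborel \<Otimes>\<^sub>M lborel))"
proof -
  have [measurable]: "g \<in> borel_measurable borel" using g by auto
  have "complex_of_real ((norm (inv_fourier g \<xi>))\<^sup>2) = inv_fourier g \<xi> * cnj (inv_fourier g \<xi>)"
    by (rule complex_norm_square)
  also have "cnj (inv_fourier g \<xi>) = (\<integral>y. cnj (g y) * cis (- (2 * pi * (y \<bullet> \<xi>))) \<partial>lborel)"
    unfolding inv_fourier_def by (simp add: Bochner_Integration.integral_cnj[symmetric] cis_cnj)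
  also have "inv_fourier g \<xi> * \<dots>
      = (\<integral>x. \<integral>y. (g x * cis (2 * pi * (x \<bullet> \<xi>))) * (cnj (g y) * cis (- (2 * pi * (y \<bullet> \<xi>)))) \<partial>lborel \<partial>lborel)"
    unfolding inv_fourier_def by simp
  also have "\<dots> = (\<integral>x. \<integral>y. g x * cnj (g y) * cis (2 * pi * ((x - y) \<bullet> \<xi>)) \<partial>lborel \<partial>lborel)"
    by (intro Bochner_Integration.integral_cong refl) (simp add: cis_mult inner_diff_left algebra_simps)
  also have "\<dots> = (\<integral>p. g (fst p) * cnj (g (snd p)) * cis (2 * pi * ((fst p - snd p) \<bullet> \<xi>)) \<partial>(lborel \<Otimes>\<^sub>M lborel))"
  proof -
    have "integrable (lborel \<Otimes>\<^sub>M lborel) (\<lambda>p. g (fst p) * cnj (g (snd p)) * cis (2 * pi * ((fst p - snd p) \<bullet> \<xi>)))"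
      by (rule lborel_pair.integrable_tensor_bound[OF g g]) (auto simp: norm_mult)
    from lborel_pair.integral_fst'[OF this] show ?thesis by simp
  qed
  finally show ?thesis .
qed

lemma gauss_weighted_norm_inv_fourier_sq:
  fixes g :: "'a::euclidean_space \<Rightarrow> complex"
  assumes g: "integrable lborel g" and e: "0 < e"
  shows "(\<integral>\<xi>. complex_of_real (gauss_weight e \<xi> * (norm (inv_fourier g \<xi>))\<^sup>2) \<partial>lborel)
    = (\<integral>p. g (fst p) * cnj (g (snd p)) * gauss_kernel e (fst p - snd p) \<partial>(lborel \<Otimes>\<^sub>M lborel))"
proof -
  have [measurable]: "g \<in> borel_measurable borel" using g by auto
  interpret pair_sigma_finite "lborel :: 'a measure" "lborel \<Otimes>\<^sub>M (lborel :: 'a measure)"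
    by (intro pair_sigma_finite.intro sigma_finite_lborel sigma_finite_pair_measure)
  let ?u = "\<lambda>p::'a \<times> 'a. g (fst p) * cnj (g (snd p))"
  have u: "integrable (lborel \<Otimes>\<^sub>M lborel) ?u"
    by (rule lborel_pair.integrable_tensor_bound[OF g g]) (auto simp: norm_mult)
  have "(\<integral>\<xi>. complex_of_real (gauss_weight e \<xi> * (norm (inv_fourier g \<xi>))\<^sup>2) \<partial>lborel)
      = (\<integral>\<xi>. \<integral>p. gauss_weight e \<xi> * (?u p * cis (2 * pi * ((fst p - snd p) \<bullet> \<xi>))) \<partial>(lborel \<Otimes>\<^sub>M lborel) \<partial>lborel)"
    by (intro Bochner_Integration.integral_cong refl)
      (simp only: of_real_mult norm_inv_fourier_sq[OF g] integral_mult_right_zero)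
  also have "\<dots> = (\<integral>p. \<integral>\<xi>. gauss_weight e \<xi> * (?u p * cis (2 * pi * ((fst p - snd p) \<bullet> \<xi>))) \<partial>lborel \<partial>(lborel \<Otimes>\<^sub>M lborel))"
    by (rule Fubini_integral[symmetric], rule integrable_tensor_bound[OF integrable_gauss_weight[OF e] u])
      (auto simp: norm_mult)
  also have "\<dots> = (\<integral>p. ?u p * inv_fourier (\<lambda>\<xi>. complex_of_real (gauss_weight e \<xi>)) (fst p - snd p) \<partial>(lborel \<Otimes>\<^sub>M lborel))"
    unfolding inv_fourier_def by (intro Bochner_Integration.integral_cong refl) (simp add: mult_ac inner_commute)
  also have "\<dots> = (\<integral>p. ?u p * gauss_kernel e (fst p - snd p) \<partial>(lborel \<Otimes>\<^sub>M lborel))"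
    by (simp add: inv_fourier_gauss_weight[OF e])
  finally show ?thesis .
qed

lemma nn_integral_pair_kernel:
  fixes w K :: "'a::euclidean_space \<Rightarrow> real"
  assumes [measurable]: "w \<in> borel_measurable borel" "K \<in> borel_measurable borel"
    and w: "\<And>x. 0 \<le> w x" and K: "\<And>u. 0 \<le> K u" "(\<integral>\<^sup>+u. K u \<partial>lborel) = 1"
  shows nn_integral_pair_kernel_fst:
      "(\<integral>\<^sup>+p. ennreal (w (fst p) * K (fst p - snd p)) \<partial>(lborel \<Otimes>\<^sub>M lborel)) = (\<integral>\<^sup>+x. w x \<partial>lborel)"
    and nn_integral_pair_kernel_snd:
      "(\<integral>\<^sup>+p. ennreal (w (snd p) * K (fst p - snd p)) \<partial>(lborel \<Otimes>\<^sub>M lborel)) = (\<integral>\<^sup>+x. w x \<partial>lborel)"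
proof -
  have "(\<integral>\<^sup>+p. ennreal (w (fst p) * K (fst p - snd p)) \<partial>(lborel \<Otimes>\<^sub>M lborel))
      = (\<integral>\<^sup>+x. ennreal (w x) * (\<integral>\<^sup>+y. ennreal (K (x - y)) \<partial>lborel) \<partial>lborel)"
    by (subst lborel.nn_integral_fst[symmetric])
      (auto intro!: nn_integral_cong simp: ennreal_mult w K(1) nn_integral_cmult[symmetric])
  then show "(\<integral>\<^sup>+p. ennreal (w (fst p) * K (fst p - snd p)) \<partial>(lborel \<Otimes>\<^sub>M lborel)) = (\<integral>\<^sup>+x. w x \<partial>lborel)"
    by (simp add: nn_integral_lborel_reflect[where F="\<lambda>u. ennreal (K u)"] K(2))
  have "(\<integral>\<^sup>+p. ennreal (w (snd p) * K (fst p - snd p)) \<partial>(lborel \<Otimes>\<^sub>M lborel))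
      = (\<integral>\<^sup>+x. \<integral>\<^sup>+y. ennreal (w y) * ennreal (K (x - y)) \<partial>lborel \<partial>lborel)"
    by (subst lborel.nn_integral_fst[symmetric]) (auto simp: ennreal_mult w K(1))
  also have "\<dots> = (\<integral>\<^sup>+y. ennreal (w y) * (\<integral>\<^sup>+x. ennreal (K (x - y)) \<partial>lborel) \<partial>lborel)"
    by (subst lborel_pair.Fubini') (auto intro!: nn_integral_cong simp: nn_integral_cmult[symmetric])
  also have "(\<lambda>y. \<integral>\<^sup>+x. ennreal (K (x - y)) \<partial>lborel) = (\<lambda>y. 1)"
    using nn_integral_lborel_translate[of "\<lambda>u. ennreal (K u)" "- _"] K(2) by simp
  finally show "(\<integral>\<^sup>+p. ennreal (w (snd p) * K (fst p - snd p)) \<partial>(lborel \<Otimes>\<^sub>M lborel)) = (\<integral>\<^sup>+x. w x \<partial>lborel)"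
    by simp
qed

text \<open>Schur's test for a convolution kernel of mass one, via \<open>2ab \<le> a\<^sup>2 + b\<^sup>2\<close>.\<close>

lemma nn_integral_kernel_form_le:
  fixes h K :: "'a::euclidean_space \<Rightarrow> real"
  assumes [measurable]: "h \<in> borel_measurable borel" "K \<in> borel_measurable borel"
    and K: "\<And>u. 0 \<le> K u" "(\<integral>\<^sup>+u. K u \<partial>lborel) = 1"
  shows "(\<integral>\<^sup>+p. ennreal (h (fst p) * h (snd p) * K (fst p - snd p)) \<partial>(lborel \<Otimes>\<^sub>M lborel))
    \<le> (\<integral>\<^sup>+x. ennreal ((h x)\<^sup>2) \<partial>lborel)"
proof -
  define F where "F = (\<integral>\<^sup>+x. ennreal ((h x)\<^sup>2) \<partial>lborel)"
  have "(\<integral>\<^sup>+p. ennreal (h (fst p) * h (snd p) * K (fst p - snd p)) \<partial>(lborel \<Otimes>\<^sub>M lborel))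
      \<le> (\<integral>\<^sup>+p. ennreal (1 / 2) * (ennreal ((h (fst p))\<^sup>2 * K (fst p - snd p)) +
            ennreal ((h (snd p))\<^sup>2 * K (fst p - snd p))) \<partial>(lborel \<Otimes>\<^sub>M lborel))"
  proof (rule nn_integral_mono)
    fix p :: "'a \<times> 'a"
    let ?a = "h (fst p)" and ?b = "h (snd p)" and ?k = "K (fst p - snd p)"
    have "?a * ?b * ?k \<le> (?a\<^sup>2 + ?b\<^sup>2) / 2 * ?k"
      using sum_squares_bound[of ?a ?b] K(1) by (intro mult_right_mono) auto
    then have "ennreal (?a * ?b * ?k) \<le> ennreal (1 / 2 * (?a\<^sup>2 * ?k + ?b\<^sup>2 * ?k))"
      by (intro ennreal_leI) (simp add: algebra_simps)
    also have "\<dots> = ennreal (1 / 2) * (ennreal (?a\<^sup>2 * ?k) + ennreal (?b\<^sup>2 * ?k))"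
      using K(1) by (subst ennreal_mult) (auto simp: ennreal_plus)
    finally show "ennreal (?a * ?b * ?k) \<le> \<dots>" .
  qed
  also have "\<dots> = ennreal (1 / 2) * (F + F)"
    unfolding F_def
    using nn_integral_pair_kernel_fst[of "\<lambda>x. (h x)\<^sup>2" K] nn_integral_pair_kernel_snd[of "\<lambda>x. (h x)\<^sup>2" K] K
    by (subst nn_integral_cmult) (auto simp: nn_integral_add)
  also have "\<dots> = (ennreal (1 / 2) * 2) * F"
    by (simp add: mult_2 distrib_left mult.assoc)
  also have "ennreal (1 / 2) * 2 = 1"
    using ennreal_mult[of "1 / 2" 2] by simp
  finally show ?thesis unfolding F_def by simp
qed

lemma nn_integral_gauss_weighted_inv_fourier_le:
  fixes g :: "'a::euclidean_space \<Rightarrow> complex"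
  assumes g: "integrable lborel g" and e: "0 < e"
  shows "(\<integral>\<^sup>+\<xi>. ennreal (gauss_weight e \<xi> * (norm (inv_fourier g \<xi>))\<^sup>2) \<partial>lborel)
    \<le> (\<integral>\<^sup>+w. ennreal ((norm (g w))\<^sup>2) \<partial>lborel)"
proof -
  have [measurable]: "g \<in> borel_measurable borel" using g by auto
  define J where "J = (\<integral>\<xi>. gauss_weight e \<xi> * (norm (inv_fourier g \<xi>))\<^sup>2 \<partial>lborel)"
  have "integrable lborel (\<lambda>\<xi>. gauss_weight e \<xi> * (norm (inv_fourier g \<xi>))\<^sup>2)"
  proof (rule Bochner_Integration.integrable_bound)
    show "integrable lborel (\<lambda>\<xi>. gauss_weight e \<xi> * (\<integral>w. norm (g w) \<partial>lborel)\<^sup>2)"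
      by (intro integrable_mult_left integrable_gauss_weight e)
    have "norm (inv_fourier g \<xi>) \<le> (\<integral>w. norm (g w) \<partial>lborel)" for \<xi>
      unfolding inv_fourier_def by (rule order_trans[OF integral_norm_bound]) (simp add: norm_mult)
    then show "AE \<xi> in lborel. norm (gauss_weight e \<xi> * (norm (inv_fourier g \<xi>))\<^sup>2)
        \<le> norm (gauss_weight e \<xi> * (\<integral>w. norm (g w) \<partial>lborel)\<^sup>2)"
      by (auto simp: gauss_weight_def abs_mult intro!: mult_left_mono power_mono)
  qed measurable
  then have "(\<integral>\<^sup>+\<xi>. ennreal (gauss_weight e \<xi> * (norm (inv_fourier g \<xi>))\<^sup>2) \<partial>lborel) = ennreal (norm (complex_of_real J))"
    unfolding J_def by (subst nn_integral_eq_integral) (auto simp: gauss_weight_def integral_nonneg_AE)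
  also have "complex_of_real J = (\<integral>p. g (fst p) * cnj (g (snd p)) * gauss_kernel e (fst p - snd p) \<partial>(lborel \<Otimes>\<^sub>M lborel))"
    unfolding J_def gauss_weighted_norm_inv_fourier_sq[OF g e, symmetric]
    by (rule integral_complex_of_real[symmetric])
  also have "ennreal (norm \<dots>)
      \<le> (\<integral>\<^sup>+p. ennreal (norm (g (fst p)) * norm (g (snd p)) * gauss_kernel e (fst p - snd p)) \<partial>(lborel \<Otimes>\<^sub>M lborel))"
    by (rule order_trans[OF norm_integral_le_nn_integral nn_integral_mono])
      (simp add: norm_mult gauss_kernel_nonneg)
  also have "\<dots> \<le> (\<integral>\<^sup>+w. ennreal ((norm (g w))\<^sup>2) \<partial>lborel)"
    by (rule nn_integral_kernel_form_le) (use nn_integral_gauss_kernel[OF e] gauss_kernel_nonneg in auto)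
  finally show ?thesis .
qed

text \<open>The Plancherel inequality for integrable functions, obtained from the Gaussian-weighted
  version by Fatou's lemma as \<open>e \<rightarrow> 0\<close>.\<close>

theorem nn_integral_inv_fourier_sq_le:
  fixes g :: "'a::euclidean_space \<Rightarrow> complex"
  assumes g: "integrable lborel g"
  shows "(\<integral>\<^sup>+\<xi>. ennreal ((norm (inv_fourier g \<xi>))\<^sup>2) \<partial>lborel) \<le> (\<integral>\<^sup>+w. ennreal ((norm (g w))\<^sup>2) \<partial>lborel)"
proof -
  have [measurable]: "g \<in> borel_measurable borel" using g by auto
  define u where "u n \<xi> = ennreal (gauss_weight (1 / Suc n) \<xi> * (norm (inv_fourier g \<xi>))\<^sup>2)" for n \<xi>
  have lim: "(\<lambda>n. u n \<xi>) \<longlonglongrightarrow> ennreal ((norm (inv_fourier g \<xi>))\<^sup>2)" for \<xi>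
  proof -
    have "(\<lambda>n. exp (- pi * (1 / real (Suc n))\<^sup>2 * (norm \<xi>)\<^sup>2) * (norm (inv_fourier g \<xi>))\<^sup>2)
        \<longlonglongrightarrow> exp (- pi * 0\<^sup>2 * (norm \<xi>)\<^sup>2) * (norm (inv_fourier g \<xi>))\<^sup>2"
      by (intro tendsto_intros LIMSEQ_Suc[OF lim_inverse_n'])
    then show ?thesis unfolding u_def gauss_weight_def by (intro tendsto_ennrealI) simp
  qed
  have "(\<integral>\<^sup>+\<xi>. ennreal ((norm (inv_fourier g \<xi>))\<^sup>2) \<partial>lborel) = (\<integral>\<^sup>+\<xi>. liminf (\<lambda>n. u n \<xi>) \<partial>lborel)"
    by (intro nn_integral_cong) (simp add: lim_imp_Liminf[OF _ lim])
  also have "\<dots> \<le> liminf (\<lambda>n. \<integral>\<^sup>+\<xi>. u n \<xi> \<partial>lborel)"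
    by (rule nn_integral_liminf) (simp add: u_def)
  also have "\<dots> \<le> (\<integral>\<^sup>+w. ennreal ((norm (g w))\<^sup>2) \<partial>lborel)"
    unfolding u_def
    by (rule order_trans[OF Liminf_le_Limsup Limsup_bounded])
      (auto intro!: always_eventually nn_integral_gauss_weighted_inv_fourier_le g)
  finally show ?thesis .
qed

section \<open>The operator \<open>T\<close>\<close>

lemma ennreal_le_of_square_le:
  fixes X c :: ennreal
  assumes "X < \<infinity>" "X\<^sup>2 \<le> c * X"
  shows "X \<le> c"
proof (cases "X = 0")
  case False
  then have "X * X \<le> X * c" using assms(2) by (simp add: power2_eq_square mult.commute)
  then show ?thesis using False assms(1) by (simp add: ennreal_mult_le_mult_iff)
qed simp

definition kernel_transform :: "('a::euclidean_space \<Rightarrow> 'a \<Rightarrow> complex) \<Rightarrow> ('a \<Rightarrow> complex) \<Rightarrow> 'a \<Rightarrow> complex" where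
  "kernel_transform A f w = (\<integral>x. A x (x - w) * f x \<partial>lborel)"

locale dominated_kernel =
  fixes A :: "'a::euclidean_space \<Rightarrow> 'a \<Rightarrow> complex" and M :: real
    and P :: "('a \<Rightarrow> ennreal) \<Rightarrow> 'a \<Rightarrow> ennreal" and K :: ennreal
  assumes A_measurable [measurable]: "(\<lambda>(x, y). A x y) \<in> borel_measurable (borel \<Otimes>\<^sub>M borel)"
    and A_L1: "AE x in lborel. (\<integral>\<^sup>+y. ennreal (norm (A x y)) \<partial>lborel) \<le> ennreal M"
    and P_measurable: "\<And>H. H \<in> borel_measurable borel \<Longrightarrow> P H \<in> borel_measurable borel"
    and P_L2: "\<And>H. H \<in> borel_measurable borel \<Longrightarrow> (\<integral>\<^sup>+x. (P H x)\<^sup>2 \<partial>lborel) \<le> K * (\<integral>\<^sup>+x. (H x)\<^sup>2 \<partial>lborel)"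
    and A_dominated: "AE x in lborel. \<forall>H \<in> borel_measurable borel.
      (\<integral>\<^sup>+y. ennreal (norm (A x y)) * H (x - y) \<partial>lborel) \<le> P H x"
begin

lemma A_slice_measurable [measurable]: "A x \<in> borel_measurable borel"
  using measurable_Pair2[OF A_measurable, of x] by simp

lemma kernel_transform_measurable [measurable]:
  assumes [measurable]: "f \<in> borel_measurable borel"
  shows "kernel_transform A f \<in> borel_measurable borel"
  unfolding kernel_transform_def by measurable

lemma norm_kernel_transform_le:
  "ennreal (norm (kernel_transform A f w)) \<le> (\<integral>\<^sup>+x. ennreal (norm (A x (x - w))) * ennreal (norm (f x)) \<partial>lborel)"
  unfolding kernel_transform_def using norm_integral_le_nn_integral[of lborel "\<lambda>x. A x (x - w) * f x"]
  by (simp add: norm_mult ennreal_mult)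

lemma nn_integral_kernel_swap:
  fixes f :: "'a \<Rightarrow> complex"
  assumes [measurable]: "f \<in> borel_measurable borel" "H \<in> borel_measurable borel"
  shows "(\<integral>\<^sup>+w. \<integral>\<^sup>+x. ennreal (norm (A x (x - w))) * ennreal (norm (f x)) * H w \<partial>lborel \<partial>lborel)
       = (\<integral>\<^sup>+x. ennreal (norm (f x)) * (\<integral>\<^sup>+y. ennreal (norm (A x y)) * H (x - y) \<partial>lborel) \<partial>lborel)"
proof -
  have "(\<integral>\<^sup>+w. \<integral>\<^sup>+x. ennreal (norm (A x (x - w))) * ennreal (norm (f x)) * H w \<partial>lborel \<partial>lborel)
      = (\<integral>\<^sup>+x. \<integral>\<^sup>+w. ennreal (norm (A x (x - w))) * ennreal (norm (f x)) * H w \<partial>lborel \<partial>lborel)"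
    by (rule lborel_pair.Fubini') measurable
  also have "\<dots> = (\<integral>\<^sup>+x. ennreal (norm (f x)) * (\<integral>\<^sup>+w. ennreal (norm (A x (x - w))) * H (x - (x - w)) \<partial>lborel) \<partial>lborel)"
    by (intro nn_integral_cong) (subst nn_integral_cmult[symmetric], measurable, simp add: mult_ac)
  also have "\<dots> = (\<integral>\<^sup>+x. ennreal (norm (f x)) * (\<integral>\<^sup>+y. ennreal (norm (A x y)) * H (x - y) \<partial>lborel) \<partial>lborel)"
    by (intro nn_integral_cong arg_cong2[where f="(*)"] refl
        nn_integral_lborel_reflect[where F="\<lambda>y. ennreal (norm (A _ y)) * H (_ - y)"]) measurable
  finally show ?thesis .
qed

lemma kernel_transform_abs_finite:
  fixes f :: "'a \<Rightarrow> complex"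
  assumes f: "integrable lborel f"
  shows "(\<integral>\<^sup>+w. \<integral>\<^sup>+x. ennreal (norm (A x (x - w))) * ennreal (norm (f x)) \<partial>lborel \<partial>lborel) < \<infinity>"
proof -
  have [measurable]: "f \<in> borel_measurable borel" using f by auto
  have "(\<integral>\<^sup>+w. \<integral>\<^sup>+x. ennreal (norm (A x (x - w))) * ennreal (norm (f x)) \<partial>lborel \<partial>lborel)
      = (\<integral>\<^sup>+x. ennreal (norm (f x)) * (\<integral>\<^sup>+y. ennreal (norm (A x y)) * 1 \<partial>lborel) \<partial>lborel)"
    using nn_integral_kernel_swap[of f "\<lambda>_. 1"] by simp
  also have "\<dots> \<le> (\<integral>\<^sup>+x. ennreal (norm (f x)) * ennreal M \<partial>lborel)"
    using A_L1 by (intro nn_integral_mono_AE) (auto elim!: eventually_mono intro!: mult_left_mono)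
  also have "\<dots> = (\<integral>\<^sup>+x. ennreal (norm (f x)) \<partial>lborel) * ennreal M"
    by (rule nn_integral_multc) measurable
  also have "\<dots> < \<infinity>"
    using f by (simp add: integrable_iff_bounded ennreal_mult_less_top)
  finally show ?thesis .
qed

lemma integrable_kernel_transform:
  assumes f: "integrable lborel f"
  shows "integrable lborel (kernel_transform A f)"
proof (rule integrableI_bounded)
  have [measurable]: "f \<in> borel_measurable borel" using f by auto
  have "(\<integral>\<^sup>+w. ennreal (norm (kernel_transform A f w)) \<partial>lborel)
      \<le> (\<integral>\<^sup>+w. \<integral>\<^sup>+x. ennreal (norm (A x (x - w))) * ennreal (norm (f x)) \<partial>lborel \<partial>lborel)"
    by (intro nn_integral_mono norm_kernel_transform_le)
  also have "\<dots> < \<infinity>"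
    using f by (rule kernel_transform_abs_finite)
  finally show "(\<integral>\<^sup>+w. ennreal (norm (kernel_transform A f w)) \<partial>lborel) < \<infinity>" .
qed (use f in simp)

lemma nn_integral_kernel_transform_dual_le:
  assumes f: "integrable lborel f" and [measurable]: "H \<in> borel_measurable borel"
  shows "(\<integral>\<^sup>+w. H w * ennreal (norm (kernel_transform A f w)) \<partial>lborel) \<le> (\<integral>\<^sup>+x. ennreal (norm (f x)) * P H x \<partial>lborel)"
proof -
  have [measurable]: "f \<in> borel_measurable borel" using f by auto
  have "(\<integral>\<^sup>+w. H w * ennreal (norm (kernel_transform A f w)) \<partial>lborel)
      \<le> (\<integral>\<^sup>+w. \<integral>\<^sup>+x. ennreal (norm (A x (x - w))) * ennreal (norm (f x)) * H w \<partial>lborel \<partial>lborel)"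
  proof (rule nn_integral_mono)
    fix w
    have "H w * ennreal (norm (kernel_transform A f w))
        \<le> H w * (\<integral>\<^sup>+x. ennreal (norm (A x (x - w))) * ennreal (norm (f x)) \<partial>lborel)"
      by (intro mult_left_mono norm_kernel_transform_le) auto
    also have "\<dots> = (\<integral>\<^sup>+x. ennreal (norm (A x (x - w))) * ennreal (norm (f x)) * H w \<partial>lborel)"
      by (subst nn_integral_cmult[symmetric]) (measurable, simp add: mult_ac)
    finally show "H w * ennreal (norm (kernel_transform A f w)) \<le> \<dots>" .
  qed
  also have "\<dots> = (\<integral>\<^sup>+x. ennreal (norm (f x)) * (\<integral>\<^sup>+y. ennreal (norm (A x y)) * H (x - y) \<partial>lborel) \<partial>lborel)"
    by (rule nn_integral_kernel_swap) measurable
  also have "\<dots> \<le> (\<integral>\<^sup>+x. ennreal (norm (f x)) * P H x \<partial>lborel)"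
    using A_dominated by (intro nn_integral_mono_AE) (auto elim!: eventually_mono intro!: mult_left_mono)
  finally show ?thesis .
qed

text \<open>Testing \<open>|kernel_transform A f|\<close> against a bounded truncation \<open>H\<close> of itself gives
  \<open>\<parallel>H\<parallel>\<^sup>2 \<le> \<integral> |f| P H \<le> \<parallel>f\<parallel> \<surd>K \<parallel>H\<parallel>\<close>; the truncation keeps \<open>\<parallel>H\<parallel>\<close> finite.\<close>

lemma kernel_transform_truncated_L2:
  assumes f: "integrable lborel f"
  shows "(\<integral>\<^sup>+w. (min (ennreal (norm (kernel_transform A f w))) (of_nat n))\<^sup>2 \<partial>lborel)
    \<le> K * (\<integral>\<^sup>+x. ennreal ((norm (f x))\<^sup>2) \<partial>lborel)"
proof -
  have [measurable]: "f \<in> borel_measurable borel" using f by auto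
  define G where "G = kernel_transform A f"
  define H where "H w = min (ennreal (norm (G w))) (of_nat n)" for w
  define X where "X = (\<integral>\<^sup>+w. (H w)\<^sup>2 \<partial>lborel)"
  define F where "F = (\<integral>\<^sup>+x. ennreal ((norm (f x))\<^sup>2) \<partial>lborel)"
  have [measurable]: "H \<in> borel_measurable borel" "P H \<in> borel_measurable borel"
    using P_measurable unfolding H_def G_def by measurable
  have "X \<le> (\<integral>\<^sup>+w. of_nat n * ennreal (norm (G w)) \<partial>lborel)"
    unfolding X_def H_def power2_eq_square
    by (intro nn_integral_mono) (simp add: mult_mono min.coboundedI1 min.coboundedI2)
  also have "\<dots> < \<infinity>"
    using integrable_kernel_transform[OF f]
    by (simp add: G_def nn_integral_cmult integrable_iff_bounded ennreal_mult_less_top of_nat_less_top)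
  finally have "X < \<infinity>" .
  have "X \<le> (\<integral>\<^sup>+w. H w * ennreal (norm (G w)) \<partial>lborel)"
    unfolding X_def H_def power2_eq_square by (intro nn_integral_mono mult_left_mono) auto
  also have "\<dots> \<le> (\<integral>\<^sup>+x. ennreal (norm (f x)) * P H x \<partial>lborel)"
    unfolding G_def by (rule nn_integral_kernel_transform_dual_le[OF f]) measurable
  finally have "X\<^sup>2 \<le> (\<integral>\<^sup>+x. ennreal (norm (f x)) * P H x \<partial>lborel)\<^sup>2"
    by (intro power_mono) auto
  also have "\<dots> \<le> F * (\<integral>\<^sup>+x. (P H x)\<^sup>2 \<partial>lborel)"
    unfolding F_def using Cauchy_Schwarz_nn_integral[of "\<lambda>x. ennreal (norm (f x))" lborel "P H"]
    by (simp add: ennreal_power)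
  also have "\<dots> \<le> F * (K * X)"
    unfolding X_def by (intro mult_left_mono P_L2) auto
  also have "\<dots> = (K * F) * X"
    by (simp only: ac_simps)
  finally have "X \<le> K * F"
    using \<open>X < \<infinity>\<close> ennreal_le_of_square_le by blast
  then show ?thesis
    unfolding X_def H_def G_def F_def .
qed

lemma kernel_transform_L2:
  assumes f: "integrable lborel f"
  shows "(\<integral>\<^sup>+w. ennreal ((norm (kernel_transform A f w))\<^sup>2) \<partial>lborel)
    \<le> K * (\<integral>\<^sup>+x. ennreal ((norm (f x))\<^sup>2) \<partial>lborel)"
proof -
  have [measurable]: "f \<in> borel_measurable borel" using f by auto
  define H where "H n w = min (ennreal (norm (kernel_transform A f w))) (of_nat n)" for n w
  have "ennreal ((norm (kernel_transform A f w))\<^sup>2) = (SUP n. (H n w)\<^sup>2)" for w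
  proof (rule antisym)
    obtain n :: nat where "norm (kernel_transform A f w) \<le> real n"
      using real_arch_simple by blast
    then have "ennreal ((norm (kernel_transform A f w))\<^sup>2) = (H n w)\<^sup>2"
      unfolding H_def by (simp add: min_def ennreal_leI ennreal_power)
    then show "ennreal ((norm (kernel_transform A f w))\<^sup>2) \<le> (SUP n. (H n w)\<^sup>2)"
      by (metis SUP_upper UNIV_I)
    show "(SUP n. (H n w)\<^sup>2) \<le> ennreal ((norm (kernel_transform A f w))\<^sup>2)"
      by (intro SUP_least) (auto simp: H_def ennreal_power[symmetric] intro!: power_mono)
  qed
  then have "(\<integral>\<^sup>+w. ennreal ((norm (kernel_transform A f w))\<^sup>2) \<partial>lborel) = (\<integral>\<^sup>+w. (SUP n. (H n w)\<^sup>2) \<partial>lborel)"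
    by simp
  also have "\<dots> = (SUP n. \<integral>\<^sup>+w. (H n w)\<^sup>2 \<partial>lborel)"
    by (rule nn_integral_monotone_convergence_SUP)
      (auto simp: incseq_def le_fun_def H_def intro!: power_mono min.mono)
  also have "\<dots> \<le> K * (\<integral>\<^sup>+x. ennreal ((norm (f x))\<^sup>2) \<partial>lborel)"
    unfolding H_def by (intro SUP_least kernel_transform_truncated_L2 f)
  finally show ?thesis .
qed


lemma integrable_kernel_pair:
  fixes f :: "'a \<Rightarrow> complex"
  assumes f: "integrable lborel f" and [measurable]: "c \<in> borel_measurable borel" and c: "\<And>w. norm (c w) = 1"
  shows "integrable (lborel \<Otimes>\<^sub>M lborel) (\<lambda>(x, w). A x (x - w) * f x * c w)"
proof -
  have [measurable]: "f \<in> borel_measurable borel" using f by auto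
  show ?thesis
  proof (rule integrableI_bounded)
    have "(\<integral>\<^sup>+p. ennreal (norm (case p of (x, w) \<Rightarrow> A x (x - w) * f x * c w)) \<partial>(lborel \<Otimes>\<^sub>M lborel))
        = (\<integral>\<^sup>+x. \<integral>\<^sup>+w. ennreal (norm (A x (x - w))) * ennreal (norm (f x)) \<partial>lborel \<partial>lborel)"
      by (subst lborel.nn_integral_fst[symmetric]) (auto simp: norm_mult ennreal_mult c)
    also have "\<dots> = (\<integral>\<^sup>+w. \<integral>\<^sup>+x. ennreal (norm (A x (x - w))) * ennreal (norm (f x)) \<partial>lborel \<partial>lborel)"
      by (rule lborel_pair.Fubini') measurable
    also have "\<dots> < \<infinity>"
      using f by (rule kernel_transform_abs_finite)
    finally show "(\<integral>\<^sup>+p. ennreal (norm (case p of (x, w) \<Rightarrow> A x (x - w) * f x * c w)) \<partial>(lborel \<Otimes>\<^sub>M lborel)) < \<infinity>" .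
  qed measurable
qed

lemma inv_fourier_kernel_transform:
  fixes f :: "'a \<Rightarrow> complex"
  assumes f: "integrable lborel f"
  shows "(\<integral>x. (\<integral>y. A x y * cis (- 2 * pi * (y \<bullet> \<xi>)) \<partial>lborel) * cis (2 * pi * (x \<bullet> \<xi>)) * f x \<partial>lborel)
    = inv_fourier (kernel_transform A f) \<xi>"
proof -
  have [measurable]: "f \<in> borel_measurable borel" using f by auto
  have "integrable (lborel \<Otimes>\<^sub>M lborel) (\<lambda>(x, w). A x (x - w) * f x * cis (2 * pi * (w \<bullet> \<xi>)))"
    using integrable_kernel_pair[OF f, of "\<lambda>w. cis (2 * pi * (w \<bullet> \<xi>))"] by simp
  note Fubini = lborel_pair.Fubini_integral[OF this]
  have "(\<integral>x. (\<integral>y. A x y * cis (- 2 * pi * (y \<bullet> \<xi>)) \<partial>lborel) * cis (2 * pi * (x \<bullet> \<xi>)) * f x \<partial>lborel)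
      = (\<integral>x. \<integral>y. A x y * f x * cis (2 * pi * ((x - y) \<bullet> \<xi>)) \<partial>lborel \<partial>lborel)"
  proof (rule Bochner_Integration.integral_cong[OF refl])
    fix x
    have "(\<integral>y. A x y * cis (- 2 * pi * (y \<bullet> \<xi>)) \<partial>lborel) * cis (2 * pi * (x \<bullet> \<xi>)) * f x
        = (\<integral>y. A x y * cis (- 2 * pi * (y \<bullet> \<xi>)) * cis (2 * pi * (x \<bullet> \<xi>)) * f x \<partial>lborel)"
      by simp
    also have "\<dots> = (\<integral>y. A x y * f x * cis (2 * pi * ((x - y) \<bullet> \<xi>)) \<partial>lborel)"
      by (intro Bochner_Integration.integral_cong refl) (simp add: cis_mult inner_diff_left algebra_simps)
    finally show "(\<integral>y. A x y * cis (- 2 * pi * (y \<bullet> \<xi>)) \<partial>lborel) * cis (2 * pi * (x \<bullet> \<xi>)) * f x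
        = (\<integral>y. A x y * f x * cis (2 * pi * ((x - y) \<bullet> \<xi>)) \<partial>lborel)" .
  qed
  also have "\<dots> = (\<integral>x. \<integral>w. A x (x - w) * f x * cis (2 * pi * (w \<bullet> \<xi>)) \<partial>lborel \<partial>lborel)"
  proof (rule Bochner_Integration.integral_cong[OF refl])
    fix x
    have "(\<lambda>y. A x y * f x * cis (2 * pi * ((x - y) \<bullet> \<xi>))) \<in> borel_measurable borel"
      by measurable
    from integral_lborel_reflect[OF this, of x]
    show "(\<integral>y. A x y * f x * cis (2 * pi * ((x - y) \<bullet> \<xi>)) \<partial>lborel)
        = (\<integral>w. A x (x - w) * f x * cis (2 * pi * (w \<bullet> \<xi>)) \<partial>lborel)"
      by simp
  qed
  also have "\<dots> = inv_fourier (kernel_transform A f) \<xi>"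
    unfolding inv_fourier_def kernel_transform_def Fubini[symmetric] by simp
  finally show ?thesis .
qed

end

lemma completion_ex_borel_measurable_complex:
  fixes g :: "'a \<Rightarrow> complex"
  assumes "g \<in> borel_measurable (completion M)"
  obtains g' where "g' \<in> borel_measurable M" "AE x in M. g x = g' x"
proof -
  have "(\<lambda>x. Re (g x)) \<in> borel_measurable (completion M)" "(\<lambda>x. Im (g x)) \<in> borel_measurable (completion M)"
    using assms by auto
  from this[THEN completion_ex_borel_measurable_real]
  obtain r i where r: "r \<in> borel_measurable M" "AE x in M. Re (g x) = r x"
    and i: "i \<in> borel_measurable M" "AE x in M. Im (g x) = i x" by blast
  show ?thesis
  proof
    show "(\<lambda>x. complex_of_real (r x) + \<i> * complex_of_real (i x)) \<in> borel_measurable M"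
      using r i by measurable
    show "AE x in M. g x = complex_of_real (r x) + \<i> * complex_of_real (i x)"
      using r(2) i(2) by eventually_elim (simp add: complex_eq_iff)
  qed
qed

lemma borel_measurable_completion_AE:
  fixes f g :: "'a \<Rightarrow> 'b::topological_space"
  assumes g: "g \<in> borel_measurable M" and ae: "AE x in M. f x = g x"
  shows "f \<in> borel_measurable (completion M)"
proof -
  obtain N where N: "N \<in> null_sets M" "{x\<in>space M. f x \<noteq> g x} \<subseteq> N"
    using ae by (auto elim!: AE_E)
  show ?thesis
  proof (rule borel_measurableI)
    fix S :: "'b set" assume "open S"
    then have gS: "g -` S \<inter> space M \<in> sets M" using g by (auto intro: measurable_sets)
    have "f -` S \<inter> space (completion M) = ((g -` S \<inter> space M) - N) \<union> ((f -` S \<inter> space M) \<inter> N)"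
      using N by auto
    also have "\<dots> \<in> sets (completion M)"
    proof (intro sets.Un)
      show "g -` S \<inter> space M - N \<in> sets (completion M)"
        using gS N(1) by (auto intro!: sets.Diff)
      show "f -` S \<inter> space M \<inter> N \<in> sets (completion M)"
        by (rule null_sets_completion[OF N(1)]) auto
    qed
    finally show "f -` S \<inter> space (completion M) \<in> sets (completion M)" .
  qed
qed

lemma integral_completion_AE:
  fixes f g :: "'a \<Rightarrow> 'b::{banach, second_countable_topology}"
  assumes g: "g \<in> borel_measurable M" and ae: "AE x in M. f x = g x"
  shows "integral\<^sup>L (completion M) f = integral\<^sup>L M g"
proof -
  have "integral\<^sup>L (completion M) f = integral\<^sup>L (completion M) g"
    using borel_measurable_completion_AE[OF g ae] g ae
    by (intro integral_cong_AE) (auto intro: measurable_completion AE_completion)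
  also have "\<dots> = integral\<^sup>L M g"
    by (rule integral_completion[OF g])
  finally show ?thesis .
qed


lemma completion_lborel_pair_ex_borel:
  fixes a :: "'a::euclidean_space \<Rightarrow> 'b::euclidean_space \<Rightarrow> complex"
  assumes "(\<lambda>(x, y). a x y) \<in> borel_measurable lebesgue"
  obtains A where "(\<lambda>(x, y). A x y) \<in> borel_measurable (borel \<Otimes>\<^sub>M borel)"
    "AE x in lborel. AE y in lborel. a x y = A x y"
proof -
  obtain a' where a': "a' \<in> borel_measurable lborel" "AE p in lborel. (\<lambda>(x, y). a x y) p = a' p"
    using assms by (rule completion_ex_borel_measurable_complex)
  show ?thesis
  proof
    show "(\<lambda>(x, y). a' (x, y)) \<in> borel_measurable (borel \<Otimes>\<^sub>M borel)"
      using a'(1) by (simp add: borel_prod)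
    have "AE p in lborel \<Otimes>\<^sub>M lborel. a (fst p) (snd p) = a' (fst p, snd p)"
      using a'(2) unfolding lborel_prod by (auto simp: case_prod_beta)
    from lborel_pair.AE_pair[OF this] show "AE x in lborel. AE y in lborel. a x y = a' (x, y)"
      by simp
  qed
qed

lemma nn_integral_conv_prod_bumps_le:
  fixes bs :: "('a::euclidean_space \<Rightarrow> complex) list"
  assumes "bs \<noteq> []" "\<forall>b\<in>set bs. bump b" and [measurable]: "H \<in> borel_measurable borel"
  shows "(\<integral>\<^sup>+y. ennreal (norm (conv_prod bs y)) * H (x - y) \<partial>lborel) \<le> (strong_maximal ^^ length bs) H x"
proof -
  obtain vs where vs: "length vs = length bs" "\<forall>v\<in>set vs. \<forall>i\<in>Basis. 0 < v \<bullet> i"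
    "\<And>y. ennreal (norm (conv_prod bs y)) \<le> box_conv vs y"
    using conv_prod_bumps_le_box_conv[OF assms(2)] by blast
  have "(\<integral>\<^sup>+y. ennreal (norm (conv_prod bs y)) * H (x - y) \<partial>lborel) \<le> (\<integral>\<^sup>+y. box_conv vs y * H (x - y) \<partial>lborel)"
    using vs(3) by (intro nn_integral_mono mult_right_mono) auto
  also have "\<dots> \<le> (strong_maximal ^^ length vs) H x"
    by (rule box_conv_avg_le_strong_maximal_pow) (use vs assms in auto)
  finally show ?thesis
    using vs(1) by simp
qed

lemma dominated_kernel_conv_prod_bumps:
  fixes a A :: "'a::euclidean_space \<Rightarrow> 'a \<Rightarrow> complex"
  assumes A: "(\<lambda>(x, y). A x y) \<in> borel_measurable (borel \<Otimes>\<^sub>M borel)"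
    and aA: "AE x in lborel. AE y in lborel. a x y = A x y"
    and bumps: "\<forall>x. \<exists>bs. length bs = k \<and> (\<forall>b\<in>set bs. bump b) \<and> a x = conv_prod bs"
    and aM: "AE x in lebesgue. (\<integral>\<^sup>+y. ennreal (norm (a x y)) \<partial>lebesgue) \<le> ennreal M"
    and k: "k \<ge> 1"
  shows "dominated_kernel A M (strong_maximal ^^ k) ((160 ^ DIM('a)) ^ k)"
proof (rule dominated_kernel.intro)
  show "AE x in lborel. (\<integral>\<^sup>+y. ennreal (norm (A x y)) \<partial>lborel) \<le> ennreal M"
    using aM aA unfolding AE_completion_iff
  proof eventually_elim
    case (elim x)
    have "(\<integral>\<^sup>+y. ennreal (norm (A x y)) \<partial>lborel) = (\<integral>\<^sup>+y. ennreal (norm (a x y)) \<partial>lebesgue)"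
      unfolding nn_integral_completion
      by (rule nn_integral_cong_AE) (use elim(2) in \<open>auto elim!: eventually_mono\<close>)
    then show ?case using elim(1) by simp
  qed
  show "AE x in lborel. \<forall>H \<in> borel_measurable borel.
      (\<integral>\<^sup>+y. ennreal (norm (A x y)) * H (x - y) \<partial>lborel) \<le> (strong_maximal ^^ k) H x"
    using aA
  proof eventually_elim
    case (elim x)
    obtain bs where bs: "length bs = k" "\<forall>b\<in>set bs. bump b" "a x = conv_prod bs"
      using bumps by blast
    show ?case
    proof
      fix H :: "'a \<Rightarrow> ennreal" assume [measurable]: "H \<in> borel_measurable borel"
      have "(\<integral>\<^sup>+y. ennreal (norm (A x y)) * H (x - y) \<partial>lborel)
          = (\<integral>\<^sup>+y. ennreal (norm (conv_prod bs y)) * H (x - y) \<partial>lborel)"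
        using elim bs(3) by (intro nn_integral_cong_AE) (auto elim!: eventually_mono)
      also have "\<dots> \<le> (strong_maximal ^^ k) H x"
        using nn_integral_conv_prod_bumps_le[OF _ bs(2)] bs(1) k by fastforce
      finally show "(\<integral>\<^sup>+y. ennreal (norm (A x y)) * H (x - y) \<partial>lborel) \<le> (strong_maximal ^^ k) H x" .
    qed
  qed
qed (use A strong_maximal_pow_L2 in auto)

lemma (in dominated_kernel) opT_eq_inv_fourier_kernel_transform:
  fixes a :: "'a \<Rightarrow> 'a \<Rightarrow> complex" and f f' :: "'a \<Rightarrow> complex"
  assumes aA: "AE x in lborel. AE y in lborel. a x y = A x y"
    and f': "integrable lborel f'" "AE x in lborel. f x = f' x"
  shows "opT a f = inv_fourier (kernel_transform A f')"
proof
  fix \<xi>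
  have [measurable]: "f' \<in> borel_measurable borel" using f' by auto
  have "opT a f \<xi> = (\<integral>x. (\<integral>y. A x y * cis (- 2 * pi * (y \<bullet> \<xi>)) \<partial>lborel) * cis (2 * pi * (x \<bullet> \<xi>)) * f' x \<partial>lborel)"
    unfolding opT_def
  proof (rule integral_completion_AE)
    show "AE x in lborel. fourier (a x) \<xi> * cis (2 * pi * (x \<bullet> \<xi>)) * f x
        = (\<integral>y. A x y * cis (- 2 * pi * (y \<bullet> \<xi>)) \<partial>lborel) * cis (2 * pi * (x \<bullet> \<xi>)) * f' x"
      using aA f'(2)
    proof eventually_elim
      case (elim x)
      have "fourier (a x) \<xi> = (\<integral>y. A x y * cis (- 2 * pi * (y \<bullet> \<xi>)) \<partial>lborel)"
        unfolding fourier_def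
        by (rule integral_completion_AE) (use elim(1) in \<open>auto elim!: eventually_mono\<close>)
      then show ?case using elim(2) by simp
    qed
  qed measurable
  also have "\<dots> = inv_fourier (kernel_transform A f') \<xi>"
    by (rule inv_fourier_kernel_transform[OF f'(1)])
  finally show "opT a f \<xi> = inv_fourier (kernel_transform A f') \<xi>" .
qed

lemma opT_L2_bound:
  fixes a :: "'a::euclidean_space \<Rightarrow> 'a \<Rightarrow> complex" and f :: "'a \<Rightarrow> complex"
  assumes k: "k \<ge> 1"
    and bumps: "\<forall>x. \<exists>bs. length bs = k \<and> (\<forall>b\<in>set bs. bump b) \<and> a x = conv_prod bs"
    and a: "(\<lambda>(x, y). a x y) \<in> borel_measurable lebesgue"
    and aM: "AE x in lebesgue. (\<integral>\<^sup>+y. ennreal (norm (a x y)) \<partial>lebesgue) \<le> ennreal M"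
    and f: "f \<in> borel_measurable lebesgue" "integrable lebesgue f"
  shows "opT a f \<in> borel_measurable lebesgue \<and> (\<integral>\<^sup>+\<xi>. ennreal ((norm (opT a f \<xi>))\<^sup>2) \<partial>lebesgue)
    \<le> (160 ^ DIM('a)) ^ k * (\<integral>\<^sup>+x. ennreal ((norm (f x))\<^sup>2) \<partial>lebesgue)"
proof -
  obtain A where A: "(\<lambda>(x, y). A x y) \<in> borel_measurable (borel \<Otimes>\<^sub>M borel)"
    and aA: "AE x in lborel. AE y in lborel. a x y = A x y"
    using a by (rule completion_lborel_pair_ex_borel)
  interpret dominated_kernel A M "strong_maximal ^^ k" "(160 ^ DIM('a)) ^ k"
    using A aA bumps aM k by (rule dominated_kernel_conv_prod_bumps)
  obtain f' where f': "f' \<in> borel_measurable lborel" "AE x in lborel. f x = f' x"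
    using f(1) by (rule completion_ex_borel_measurable_complex)
  have "integrable (completion lborel) f'"
    using f(2) by (rule integrable_cong_AE_imp) (use f' in \<open>auto intro: measurable_completion AE_completion\<close>)
  then have "integrable lborel f'"
    using f'(1) by (simp add: integrable_completion)
  then have T: "opT a f = inv_fourier (kernel_transform A f')"
    using aA f'(2) by (intro opT_eq_inv_fourier_kernel_transform)
  have "(\<integral>\<^sup>+\<xi>. ennreal ((norm (opT a f \<xi>))\<^sup>2) \<partial>lebesgue)
      \<le> (\<integral>\<^sup>+w. ennreal ((norm (kernel_transform A f' w))\<^sup>2) \<partial>lborel)"
    unfolding T nn_integral_completion
    by (rule nn_integral_inv_fourier_sq_le[OF integrable_kernel_transform]) fact
  also have "\<dots> \<le> (160 ^ DIM('a)) ^ k * (\<integral>\<^sup>+x. ennreal ((norm (f' x))\<^sup>2) \<partial>lborel)"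
    by (rule kernel_transform_L2) fact
  also have "(\<integral>\<^sup>+x. ennreal ((norm (f' x))\<^sup>2) \<partial>lborel) = (\<integral>\<^sup>+x. ennreal ((norm (f x))\<^sup>2) \<partial>lebesgue)"
    unfolding nn_integral_completion using f'(2)
    by (intro nn_integral_cong_AE) (auto elim!: eventually_mono)
  finally show ?thesis
    using f'(1) unfolding T by (auto intro: measurable_completion)
qed

theorem lemma2p1:
  fixes k :: nat
  assumes "k \<ge> 1"
  shows "\<exists>C::real. \<forall>(a :: 'a::euclidean_space \<Rightarrow> 'a \<Rightarrow> complex).
     ((\<forall>x. \<exists>bs. length bs = k \<and> (\<forall>b\<in>set bs. bump b) \<and> a x = conv_prod bs) \<and>
      (\<lambda>(x, y). a x y) \<in> borel_measurable lebesgue \<and>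
      (\<exists>M::real. AE x in lebesgue. (\<integral>\<^sup>+ y. ennreal (norm (a x y)) \<partial>lebesgue) \<le> ennreal M))
     \<longrightarrow> (\<forall>f :: 'a \<Rightarrow> complex. f \<in> borel_measurable lebesgue \<and> integrable lebesgue f \<and>
            integrable lebesgue (\<lambda>x. (norm (f x))\<^sup>2 :: real) \<longrightarrow>
            opT a f \<in> borel_measurable lebesgue \<and>
            (\<integral>\<^sup>+ \<xi>. ennreal ((norm (opT a f \<xi>))\<^sup>2) \<partial>lebesgue)
              \<le> ennreal (C\<^sup>2) * (\<integral>\<^sup>+ x. ennreal ((norm (f x))\<^sup>2) \<partial>lebesgue))"
proof -
  have "ennreal ((sqrt ((160 ^ DIM('a)) ^ k))\<^sup>2) = (160 ^ DIM('a)) ^ k"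
    by (simp flip: ennreal_power)
  then show ?thesis
    using opT_L2_bound[OF assms] by (intro exI[of _ "sqrt ((160 ^ DIM('a)) ^ k)"]) auto
qed

end
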